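(* Let $G$ be a simple digraph with $n$ vertices $v_1,\ldots,v_n$, $m$ arcs and $p$ components $C_1,\ldots,C_p$, and let $M_1=m+\frac12\sum_{i=1}^n(d_i^+-d_i^-)^2$. If $SLE(G)=\sqrt{2M_1(n-p)}$, then each component $C_i$ is Eulerian (every vertex of $C_i$ has equal in-degree and out-degree) and has an odd number of vertices.
   Context: A simple digraph is an orientation of a simple undirected graph (no loops, and between two distinct vertices at most one arc, in one direction). Components are the connected components of the underlying undirected graph. $d_i^+,d_i^-$ are the out- and in-degree of $v_i$. The skew-adjacency matrix $S(G)=[s_{ij}]$ has $s_{ij}=1$ if $(v_i,v_j)$ is an arc, $s_{ij}=-1$ if $(v_j,v_i)$ is an arc, and $0$ otherwise. $\widetilde{D}(G)=\mathrm{diag}(d_1^+-d_1^-,\ldots,d_n^+-d_n^-)$, $\widetilde{SL}(G)=\widetilde{D}(G)-S(G)$, and $SLE(G)=\sum_{i=1}^n|\mu_i|$ where $\mu_1,\ldots,\mu_n$ are the eigenvalues of $\widetilde{SL}(G)$ counted with algebraic multiplicity. *)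

theory Defs
  imports Complex_Main "Jordan_Normal_Form.Char_Poly"
begin

definition simple_digraph :: "nat \<Rightarrow> (nat \<times> nat) set \<Rightarrow> bool" where
  "simple_digraph n A \<longleftrightarrow> A \<subseteq> {0..<n} \<times> {0..<n} \<and> (\<forall>i. (i,i) \<notin> A)
     \<and> (\<forall>i j. (i,j) \<in> A \<longrightarrow> (j,i) \<notin> A)"

definition outdeg :: "(nat \<times> nat) set \<Rightarrow> nat \<Rightarrow> nat" where
  "outdeg A i = card {j. (i,j) \<in> A}"

definition indeg :: "(nat \<times> nat) set \<Rightarrow> nat \<Rightarrow> nat" where
  "indeg A i = card {j. (j,i) \<in> A}"

definition components :: "nat \<Rightarrow> (nat \<times> nat) set \<Rightarrow> nat set set" where
  "components n A = {0..<n} // ((A \<union> A\<inverse>)\<^sup>*)"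

definition skew_adj :: "nat \<Rightarrow> (nat \<times> nat) set \<Rightarrow> complex mat" where
  "skew_adj n A = mat n n (\<lambda>(i,j). if (i,j) \<in> A then 1 else if (j,i) \<in> A then -1 else 0)"

definition Dtilde :: "nat \<Rightarrow> (nat \<times> nat) set \<Rightarrow> complex mat" where
  "Dtilde n A = mat n n (\<lambda>(i,j). if i = j then of_int (int (outdeg A i) - int (indeg A i)) else 0)"

definition skew_lap :: "nat \<Rightarrow> (nat \<times> nat) set \<Rightarrow> complex mat" where
  "skew_lap n A = Dtilde n A - skew_adj n A"

definition SLE :: "nat \<Rightarrow> (nat \<times> nat) set \<Rightarrow> real" where
  "SLE n A = (\<Sum>\<mu> \<in> {\<mu>. poly (char_poly (skew_lap n A)) \<mu> = 0}.
      real (order \<mu> (char_poly (skew_lap n A))) * cmod \<mu>)"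

definition M1 :: "nat \<Rightarrow> (nat \<times> nat) set \<Rightarrow> real" where
  "M1 n A = real (card A) + (1/2) * (\<Sum>i<n. (real (outdeg A i) - real (indeg A i))^2)"

end

theory Submission
  imports Defs
begin

text \<open>Let \<open>L\<close> be the skew Laplacian and \<open>p\<close> the number of components. The normalized
  indicator vectors of the components lie in the kernel of \<open>L\<close>, so \<open>L\<close> has a Schur form
  \<open>L = U T U\<^sup>*\<close> whose first \<open>p\<close> columns of \<open>U\<close> are these vectors and whose first \<open>p\<close> diagonal
  entries vanish. Hence \<open>SLE = \<Sum>\<^sub>i\<^sub>>\<^sub>p |t\<^sub>i\<^sub>i| \<le> \<surd>((n-p) \<Sum>|t\<^sub>i\<^sub>i|\<^sup>2) \<le> \<surd>((n-p) \<parallel>T\<parallel>\<^sub>F\<^sup>2)\<close> and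
  \<open>\<parallel>T\<parallel>\<^sub>F\<^sup>2 = \<parallel>L\<parallel>\<^sub>F\<^sup>2 = 2 M\<^sub>1\<close>. Equality forces \<open>T\<close> to be diagonal with \<open>t\<^sub>i\<^sub>i \<noteq> 0\<close> for \<open>i > p\<close>.
  Then \<open>L\<close> is normal, which forces out-degree = in-degree everywhere, and the kernel of \<open>L\<close> consists
  of the vectors that are constant on components. For a component \<open>C\<close>, the skew Laplacian of the
  arcs inside \<open>C\<close> is then real skew-symmetric with a kernel of dimension \<open>n - |C| + 1\<close>; since the
  multiplicity of the eigenvalue \<open>0\<close> of a real skew-symmetric \<open>n \<times> n\<close> matrix has the parity of
  \<open>n\<close>, \<open>|C|\<close> is odd.\<close>

section \<open>Unitary matrices\<close>

lemma index_mult_mat_sum: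
  fixes A B :: "'a::semiring_0 mat"
  assumes "A \<in> carrier_mat a b" "B \<in> carrier_mat b c" "i < a" "j < c"
  shows "(A * B) $$ (i,j) = (\<Sum>l<b. A $$ (i,l) * B $$ (l,j))"
  using assms by (auto simp: scalar_prod_def lessThan_atLeast0 intro!: sum.cong)

lemma index_mult_mat_vec_sum:
  fixes A :: "'a::semiring_0 mat"
  assumes "A \<in> carrier_mat a b" "v \<in> carrier_vec b" "i < a"
  shows "(A *\<^sub>v v) $ i = (\<Sum>l<b. A $$ (i,l) * v $ l)"
  using assms by (auto simp: scalar_prod_def lessThan_atLeast0 intro!: sum.cong)

lemma sum_lessThan_delta_mult [simp]:
  fixes f :: "nat \<Rightarrow> 'a::semiring_1"
  shows "i < n \<Longrightarrow> (\<Sum>l<n. (if l = i then 1 else 0) * f l) = f i"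
    and "i < n \<Longrightarrow> (\<Sum>l<n. f l * (if l = i then 1 else 0)) = f i"
  by (simp_all add: if_distrib[of "\<lambda>x. x * _"] if_distrib[of "\<lambda>x. _ * x"] cong: if_cong)

lemma mult_mat_unit_vec:
  fixes M :: "'a::semiring_1 mat"
  assumes M: "M \<in> carrier_mat n n" and j: "j < n"
  shows "M *\<^sub>v unit_vec n j = col M j"
proof (rule eq_vecI)
  fix i assume "i < dim_vec (col M j)"
  then have i: "i < n" using M by auto
  show "(M *\<^sub>v unit_vec n j) $ i = col M j $ i"
    using i j M by (simp add: index_mult_mat_vec_sum[OF M])
qed (insert M, auto)

definition adjoint_mat :: "complex mat \<Rightarrow> complex mat" where
  "adjoint_mat X = mat (dim_col X) (dim_row X) (\<lambda>(i,j). cnj (X $$ (j,i)))"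

definition unitary_mat :: "nat \<Rightarrow> complex mat \<Rightarrow> bool" where
  "unitary_mat n U \<longleftrightarrow> U \<in> carrier_mat n n \<and> adjoint_mat U * U = 1\<^sub>m n \<and> U * adjoint_mat U = 1\<^sub>m n"

definition cinner :: "nat \<Rightarrow> complex vec \<Rightarrow> complex vec \<Rightarrow> complex" where
  "cinner n x y = (\<Sum>l<n. cnj (x$l) * y$l)"

lemma adjoint_mat_carrier [simp]: "X \<in> carrier_mat a b \<Longrightarrow> adjoint_mat X \<in> carrier_mat b a"
  by (auto simp: adjoint_mat_def)

lemma adjoint_mat_dim [simp]:
  "dim_row (adjoint_mat X) = dim_col X" "dim_col (adjoint_mat X) = dim_row X"
  by (auto simp: adjoint_mat_def)

lemma index_adjoint_mat [simp]:
  "i < dim_col X \<Longrightarrow> j < dim_row X \<Longrightarrow> adjoint_mat X $$ (i,j) = cnj (X $$ (j,i))"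
  by (auto simp: adjoint_mat_def)

lemma adjoint_mat_adjoint_mat [simp]: "adjoint_mat (adjoint_mat X) = X"
  by (rule eq_matI) auto

lemma adjoint_mat_mult:
  assumes "X \<in> carrier_mat a b" "Y \<in> carrier_mat b c"
  shows "adjoint_mat (X * Y) = adjoint_mat Y * adjoint_mat X"
proof (rule eq_matI)
  fix i j assume "i < dim_row (adjoint_mat Y * adjoint_mat X)" "j < dim_col (adjoint_mat Y * adjoint_mat X)"
  then have ij: "i < c" "j < a" using assms by auto
  have "adjoint_mat (X * Y) $$ (i,j) = cnj ((X * Y) $$ (j,i))"
    using ij assms by simp
  also have "\<dots> = (\<Sum>l<b. cnj (X $$ (j,l)) * cnj (Y $$ (l,i)))"
    using ij by (simp add: index_mult_mat_sum[OF assms] del: index_mult_mat)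
  also have "\<dots> = (adjoint_mat Y * adjoint_mat X) $$ (i,j)"
    by (subst index_mult_mat_sum[of _ c b _ a]) (use ij assms in \<open>auto simp: mult.commute intro!: sum.cong\<close>)
  finally show "adjoint_mat (X * Y) $$ (i, j) = (adjoint_mat Y * adjoint_mat X) $$ (i, j)" .
qed (insert assms, auto)

lemma cinner_mult_mat_vec:
  assumes M: "M \<in> carrier_mat n n" and x: "x \<in> carrier_vec n" and y: "y \<in> carrier_vec n"
  shows "cinner n x (M *\<^sub>v y) = cinner n (adjoint_mat M *\<^sub>v x) y"
proof -
  have "cinner n x (M *\<^sub>v y) = (\<Sum>l<n. \<Sum>m<n. cnj (x$l) * (M$$(l,m) * y$m))"
    unfolding cinner_def by (auto simp: index_mult_mat_vec_sum[OF M y] sum_distrib_left)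
  also have "\<dots> = (\<Sum>m<n. \<Sum>l<n. cnj (x$l) * (M$$(l,m) * y$m))" by (rule sum.swap)
  also have "\<dots> = cinner n (adjoint_mat M *\<^sub>v x) y"
    unfolding cinner_def
  proof (rule sum.cong[OF refl])
    fix m assume m: "m \<in> {..<n}"
    have "(adjoint_mat M *\<^sub>v x) $ m = (\<Sum>l<n. adjoint_mat M $$ (m,l) * x $ l)"
      by (rule index_mult_mat_vec_sum[of _ n n]) (use M x m in auto)
    also have "\<dots> = (\<Sum>l<n. cnj (M $$ (l,m)) * x $ l)"
      using M m by (auto intro!: sum.cong)
    finally show "(\<Sum>l<n. cnj (x$l) * (M$$(l,m) * y$m)) = cnj ((adjoint_mat M *\<^sub>v x) $ m) * y $ m"
      by (simp add: sum_distrib_right sum_distrib_left mult_ac)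
  qed
  finally show ?thesis .
qed

lemma cinner_col:
  assumes U: "U \<in> carrier_mat n n" and a: "a < n" and b: "b < n"
  shows "cinner n (col U a) (col U b) = (adjoint_mat U * U) $$ (a,b)"
  using assms by (subst index_mult_mat_sum[of _ n n _ n]) (auto simp: cinner_def)

lemma cinner_self: "cinner n w w = complex_of_real (\<Sum>l<n. (cmod (w$l))^2)"
  unfolding cinner_def of_real_sum by (intro sum.cong refl) (simp only: complex_norm_square mult.commute)

lemma unitary_mat_carrier: "unitary_mat n U \<Longrightarrow> U \<in> carrier_mat n n"
  by (simp add: unitary_mat_def)

lemma unitary_matI:
  assumes "U \<in> carrier_mat n n" "adjoint_mat U * U = 1\<^sub>m n"
  shows "unitary_mat n U"
  using assms mat_mult_left_right_inverse[of "adjoint_mat U" n U] unfolding unitary_mat_def by auto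

lemma unitary_mat_one: "unitary_mat n (1\<^sub>m n)"
  by (rule unitary_matI) auto

lemma unitary_mat_mult:
  assumes U: "unitary_mat n U" and V: "unitary_mat n V"
  shows "unitary_mat n (U * V)"
proof (rule unitary_matI)
  have Uc: "U \<in> carrier_mat n n" and Vc: "V \<in> carrier_mat n n"
    using U V unitary_mat_def by auto
  show "U * V \<in> carrier_mat n n" using Uc Vc by auto
  have "adjoint_mat (U*V) * (U*V) = adjoint_mat V * ((adjoint_mat U * U) * V)"
    using Uc Vc by (simp add: adjoint_mat_mult[OF Uc Vc] assoc_mult_mat[of _ n n _ n _ n])
  also have "\<dots> = 1\<^sub>m n" using U V Vc unfolding unitary_mat_def by simp
  finally show "adjoint_mat (U*V) * (U*V) = 1\<^sub>m n" .
qed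

lemma unitary_mat_cancel_left:
  "unitary_mat n U \<Longrightarrow> dim_row X = n \<Longrightarrow> U * (adjoint_mat U * X) = X"
  "unitary_mat n U \<Longrightarrow> dim_row X = n \<Longrightarrow> adjoint_mat U * (U * X) = X"
  unfolding unitary_mat_def by (auto simp flip: assoc_mult_mat[of _ n n _ n _ "dim_col X"])

lemma unitary_mat_cancel_vec:
  "unitary_mat n U \<Longrightarrow> x \<in> carrier_vec n \<Longrightarrow> U *\<^sub>v (adjoint_mat U *\<^sub>v x) = x"
  unfolding unitary_mat_def by (auto simp flip: assoc_mult_mat_vec[of _ n n _ n])

lemma unitary_mat_similar:
  assumes U: "unitary_mat n U" and A: "A \<in> carrier_mat n n"
  shows "A = U * (adjoint_mat U * A * U) * adjoint_mat U"
    and "similar_mat A (adjoint_mat U * A * U)"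
proof -
  have Uc: "U \<in> carrier_mat n n" using U unitary_mat_carrier by auto
  show eq: "A = U * (adjoint_mat U * A * U) * adjoint_mat U"
    using Uc A U[unfolded unitary_mat_def]
    by (simp add: assoc_mult_mat[of _ n n _ n _ n] mult_carrier_mat[of _ n n _ n] unitary_mat_cancel_left(1)[OF U])
  show "similar_mat A (adjoint_mat U * A * U)"
    by (rule similar_matI[of _ _ U "adjoint_mat U" n]) (use eq Uc A U in \<open>auto simp: unitary_mat_def\<close>)
qed

definition frobenius_sq :: "complex mat \<Rightarrow> real" where
  "frobenius_sq X = (\<Sum>i<dim_row X. \<Sum>j<dim_col X. (cmod (X $$ (i,j)))^2)"

definition mat_trace :: "'a::comm_semiring_0 mat \<Rightarrow> 'a" where
  "mat_trace X = (\<Sum>i<dim_row X. X $$ (i,i))"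

lemma mat_trace_mult_comm:
  fixes X Y :: "'a::comm_semiring_0 mat"
  assumes X: "X \<in> carrier_mat a b" and Y: "Y \<in> carrier_mat b a"
  shows "mat_trace (X * Y) = mat_trace (Y * X)"
proof -
  have "mat_trace (X * Y) = (\<Sum>i<a. \<Sum>l<b. X$$(i,l) * Y$$(l,i))"
    unfolding mat_trace_def using X Y
    by (auto simp del: index_mult_mat(1) simp: index_mult_mat_sum[OF X Y] intro!: sum.cong)
  also have "\<dots> = (\<Sum>l<b. \<Sum>i<a. Y$$(l,i) * X$$(i,l))"
    by (subst sum.swap) (simp add: mult.commute)
  also have "\<dots> = mat_trace (Y * X)"
    unfolding mat_trace_def using X Y
    by (auto simp del: index_mult_mat(1) simp: index_mult_mat_sum[OF Y X] intro!: sum.cong)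
  finally show ?thesis .
qed

lemma frobenius_sq_eq_trace:
  assumes X: "X \<in> carrier_mat a b"
  shows "complex_of_real (frobenius_sq X) = mat_trace (X * adjoint_mat X)"
proof -
  have "mat_trace (X * adjoint_mat X) = (\<Sum>i<a. \<Sum>l<b. X$$(i,l) * cnj (X$$(i,l)))"
    unfolding mat_trace_def using X
    by (auto simp del: index_mult_mat(1) simp: index_mult_mat_sum[of X a b "adjoint_mat X" a]
        intro!: sum.cong)
  also have "\<dots> = complex_of_real (frobenius_sq X)"
    unfolding frobenius_sq_def using X by (simp only: of_real_sum complex_norm_square carrier_matD)
  finally show ?thesis by simp
qed

lemma frobenius_sq_unitary_conj:
  assumes U: "unitary_mat n U" and A: "A \<in> carrier_mat n n"
  shows "frobenius_sq (adjoint_mat U * A * U) = frobenius_sq A"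
proof -
  have Uc: "U \<in> carrier_mat n n" using U unitary_mat_carrier by auto
  let ?T = "adjoint_mat U * A * U"
  have Tc: "?T \<in> carrier_mat n n" using Uc A by auto
  have "adjoint_mat ?T = adjoint_mat U * adjoint_mat A * U"
    using Uc A by (simp add: adjoint_mat_mult[of _ n n _ n] assoc_mult_mat[of _ n n _ n _ n])
  then have eq: "?T * adjoint_mat ?T = adjoint_mat U * ((A * adjoint_mat A) * U)"
    using Uc A by (simp add: assoc_mult_mat[of _ n n _ n _ n] unitary_mat_cancel_left(1)[OF U]
        mult_carrier_mat[of _ n n _ n])
  have "complex_of_real (frobenius_sq ?T) = mat_trace (?T * adjoint_mat ?T)"
    by (rule frobenius_sq_eq_trace[OF Tc])
  also have "\<dots> = mat_trace (((A * adjoint_mat A) * U) * adjoint_mat U)"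
    unfolding eq by (rule mat_trace_mult_comm[of _ n n]) (use Uc A in auto)
  also have "\<dots> = mat_trace (A * adjoint_mat A)"
    using U[unfolded unitary_mat_def] A Uc
    by (simp add: assoc_mult_mat[of _ n n _ n _ n] mult_carrier_mat[of _ n n _ n])
  also have "\<dots> = complex_of_real (frobenius_sq A)"
    by (rule frobenius_sq_eq_trace[OF A, symmetric])
  finally show ?thesis by simp
qed

definition householder_mat :: "nat \<Rightarrow> complex \<Rightarrow> complex vec \<Rightarrow> complex mat" where
  "householder_mat n \<tau> u = mat n n (\<lambda>(i,j). (if i = j then 1 else 0) - \<tau> * u$i * cnj (u$j))"

lemma householder_mat_unitary:
  assumes \<tau>: "cnj \<tau> * \<tau> * cinner n u u = \<tau> + cnj \<tau>"
  shows "unitary_mat n (householder_mat n \<tau> u)"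
proof -
  define V where "V = householder_mat n \<tau> u"
  have Vc: "V \<in> carrier_mat n n" unfolding V_def householder_mat_def by auto
  have Ve: "V $$ (i,j) = (if i = j then 1 else 0) - \<tau> * u$i * cnj (u$j)" if "i < n" "j < n" for i j
    using that unfolding V_def householder_mat_def by auto
  have "adjoint_mat V * V = 1\<^sub>m n"
  proof (rule eq_matI)
    fix i j assume "i < dim_row (1\<^sub>m n)" "j < dim_col (1\<^sub>m n)"
    then have ij: "i < n" "j < n" by auto
    have "(adjoint_mat V * V) $$ (i,j) = (\<Sum>l<n. cnj (V$$(l,i)) * V$$(l,j))"
      by (subst index_mult_mat_sum[of _ n n _ n]) (use Vc ij in \<open>auto intro!: sum.cong\<close>)
    also have "\<dots> = (\<Sum>l<n. (if l = i then 1 else 0) * (if l = j then 1 else 0)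
         - (if l = i then 1 else 0) * (\<tau> * u$l * cnj (u$j))
         - (cnj \<tau> * cnj (u$l) * u$i) * (if l = j then 1 else 0)
         + (cnj \<tau> * \<tau> * u$i * cnj (u$j)) * (cnj (u$l) * u$l))"
      by (rule sum.cong[OF refl]) (use ij in \<open>auto simp: Ve algebra_simps\<close>)
    also have "\<dots> = (if i = j then 1 else 0)
        + u$i * cnj (u$j) * (cnj \<tau> * \<tau> * cinner n u u - \<tau> - cnj \<tau>)"
      using ij by (simp add: sum.distrib sum_subtractf sum_distrib_left[symmetric] cinner_def)
        (simp add: algebra_simps)
    finally show "(adjoint_mat V * V) $$ (i,j) = 1\<^sub>m n $$ (i,j)" using ij \<tau> by simp
  qed (use Vc in auto)
  then show ?thesis unfolding V_def by (rule unitary_matI[OF Vc[unfolded V_def]])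
qed

lemma unitary_mat_completion:
  assumes k: "k < n" and w: "w \<in> carrier_vec n" and w0: "\<forall>i<k. w$i = 0"
    and nw: "cinner n w w = 1"
  shows "\<exists>V. unitary_mat n V \<and> (\<forall>i<n. \<forall>j<k. V$$(i,j) = (if i = j then 1 else 0))
            \<and> (\<forall>i<n. V$$(i,k) = w$i)"
proof (cases "w$k = 1")
  case True
  have "(\<Sum>l<n. (cmod (w$l))^2) = 1" using nw unfolding cinner_self
    by (metis of_real_eq_1_iff)
  moreover have "(\<Sum>l<n. (cmod (w$l))^2) = (cmod (w$k))^2 + (\<Sum>l\<in>{..<n}-{k}. (cmod (w$l))^2)"
    using k by (subst sum.remove[of _ k]) auto
  ultimately have "(\<Sum>l\<in>{..<n}-{k}. (cmod (w$l))^2) = 0" using True by simp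
  then have "\<And>l. l < n \<Longrightarrow> l \<noteq> k \<Longrightarrow> w$l = 0"
    by (subst (asm) sum_nonneg_eq_0_iff) auto
  then show ?thesis
    by (intro exI[of _ "1\<^sub>m n"]) (use k True in \<open>auto simp: unitary_mat_one\<close>)
next
  case False
  txt \<open>The Householder reflection with \<open>u = e\<^sub>k - w\<close> maps \<open>e\<^sub>k\<close> to \<open>w\<close> and fixes
    \<open>e\<^sub>0, \<dots>, e\<^sub>k\<^sub>-\<^sub>1\<close>.\<close>
  define z where "z = 1 - w$k"
  have z: "cnj z \<noteq> 0" using False unfolding z_def by auto
  define u where "u = vec n (\<lambda>i. (if i = k then 1 else 0) - w$i)"
  have u: "\<And>i. i < n \<Longrightarrow> u$i = (if i = k then 1 else 0) - w$i" unfolding u_def by auto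
  have "cinner n u u = (\<Sum>l<n. (if l = k then 1 else 0) * (1 - w$l - cnj (w$l)) + cnj (w$l) * w$l)"
    unfolding cinner_def by (rule sum.cong[OF refl]) (auto simp: u algebra_simps)
  also have "\<dots> = z + cnj z"
    using k nw unfolding z_def cinner_def sum.distrib by (simp add: complex_cnj_diff)
  finally have "cnj (1 / cnj z) * (1 / cnj z) * cinner n u u = 1 / cnj z + cnj (1 / cnj z)"
    using z by (simp add: field_simps)
  then have unit: "unitary_mat n (householder_mat n (1 / cnj z) u)"
    by (rule householder_mat_unitary)
  show ?thesis
  proof (intro exI[of _ "householder_mat n (1 / cnj z) u"] conjI allI impI unit)
    fix i j assume ij: "i < n" "j < k"
    then show "householder_mat n (1 / cnj z) u $$ (i,j) = (if i = j then 1 else 0)"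
      using u[of j] w0 k by (simp add: householder_mat_def)
  next
    fix i assume i: "i < n"
    have "u$k = z" using u[of k] k unfolding z_def by simp
    then show "householder_mat n (1 / cnj z) u $$ (i,k) = w$i"
      using i k z u[of i] by (simp add: householder_mat_def)
  qed
qed

lemma sum_lessThan_shift:
  fixes g :: "nat \<Rightarrow> 'a::comm_monoid_add"
  assumes "k \<le> n" "\<forall>l<k. g l = 0"
  shows "(\<Sum>l<n. g l) = (\<Sum>l<n-k. g (l+k))"
proof -
  have "(\<Sum>l<n. g l) = (\<Sum>l\<in>{0..<k}. g l) + (\<Sum>l\<in>{k..<n}. g l)"
    unfolding lessThan_atLeast0 by (rule sum.atLeastLessThan_concat[symmetric]) (use assms in auto)
  also have "(\<Sum>l\<in>{0..<k}. g l) = 0" using assms by simp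
  also have "(\<Sum>l\<in>{k..<n}. g l) = (\<Sum>l\<in>{0..<n-k}. g (l+k))"
    using sum.shift_bounds_nat_ivl[of g 0 k "n-k"] assms by simp
  finally show ?thesis by (simp add: lessThan_atLeast0)
qed

lemma exists_unit_eigenvector:
  fixes M :: "complex mat"
  assumes M: "M \<in> carrier_mat m m" and m: "0 < m"
  obtains v \<mu> where "v \<in> carrier_vec m" "cinner m v v = 1" "M *\<^sub>v v = \<mu> \<cdot>\<^sub>v v"
proof -
  obtain as where cp: "char_poly M = (\<Prod>a\<leftarrow>as. [:-a,1:])" and las: "length as = m"
    using char_poly_factorized[OF M] by auto
  obtain \<mu> as' where as: "as = \<mu> # as'" using las m by (cases as) auto
  have "poly (char_poly M) \<mu> = 0" unfolding cp as by simp
  then obtain v where "eigenvector M v \<mu>"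
    using eigenvalue_root_char_poly[OF M] unfolding eigenvalue_def by auto
  then have vc: "v \<in> carrier_vec m" and vnz: "v \<noteq> 0\<^sub>v m" and Mv: "M *\<^sub>v v = \<mu> \<cdot>\<^sub>v v"
    using M unfolding eigenvector_def by auto
  obtain l0 where l0: "l0 < m" "v$l0 \<noteq> 0"
    using vnz vc by (metis eq_vecI index_zero_vec carrier_vecD)
  define r where "r = (\<Sum>l<m. (cmod (v$l))^2)"
  have "(cmod (v$l0))^2 \<le> r" unfolding r_def by (rule member_le_sum) (use l0 in auto)
  moreover have "(cmod (v$l0))^2 > 0" using l0 by simp
  ultimately have r: "r > 0" by linarith
  define c where "c = complex_of_real (1 / sqrt r)"
  have c: "cnj c * c = complex_of_real (1 / r)"
    using r unfolding c_def by (simp flip: of_real_mult)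
  show thesis
  proof
    show "c \<cdot>\<^sub>v v \<in> carrier_vec m" using vc by simp
    have "cinner m (c \<cdot>\<^sub>v v) (c \<cdot>\<^sub>v v) = cnj c * c * cinner m v v"
      unfolding cinner_def using vc by (simp add: sum_distrib_left mult_ac)
    also have "\<dots> = 1" unfolding c cinner_self r_def[symmetric] using r by (simp flip: of_real_mult)
    finally show "cinner m (c \<cdot>\<^sub>v v) (c \<cdot>\<^sub>v v) = 1" .
    show "M *\<^sub>v (c \<cdot>\<^sub>v v) = \<mu> \<cdot>\<^sub>v (c \<cdot>\<^sub>v v)"
      using M vc Mv by (simp add: mult_mat_vec smult_smult_assoc mult.commute)
  qed
qed

lemma exists_trailing_eigenvector:
  assumes T: "T \<in> carrier_mat n n" and k: "k < n"
  shows "\<exists>w \<mu>. w \<in> carrier_vec n \<and> (\<forall>i<k. w$i = 0) \<and> cinner n w w = 1 \<and>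
     (\<forall>a. k \<le> a \<and> a < n \<longrightarrow> (T *\<^sub>v w)$a = \<mu> * w$a)"
proof -
  define m where "m = n - k"
  define T' where "T' = mat m m (\<lambda>(i,j). T$$(i+k,j+k))"
  have T'c: "T' \<in> carrier_mat m m" unfolding T'_def by auto
  obtain v \<mu> where vc: "v \<in> carrier_vec m" and nv: "cinner m v v = 1" and Tv: "T' *\<^sub>v v = \<mu> \<cdot>\<^sub>v v"
    using exists_unit_eigenvector[OF T'c] k unfolding m_def by auto
  define w where "w = vec n (\<lambda>i. if i < k then 0 else v$(i-k))"
  have wc: "w \<in> carrier_vec n" unfolding w_def by auto
  have we: "\<And>i. i < n \<Longrightarrow> w$i = (if i < k then 0 else v$(i-k))" unfolding w_def by auto
  show ?thesis
  proof (intro exI[of _ w] exI[of _ \<mu>] conjI allI impI wc)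
    fix i assume "i < k" then show "w$i = 0" using k we by auto
  next
    have "cinner n w w = (\<Sum>l<m. cnj (w$(l+k)) * w$(l+k))"
      unfolding cinner_def m_def by (rule sum_lessThan_shift) (use k we in auto)
    also have "\<dots> = cinner m v v" unfolding cinner_def by (rule sum.cong[OF refl]) (auto simp: we m_def)
    finally show "cinner n w w = 1" using nv by simp
  next
    fix b assume b: "k \<le> b \<and> b < n"
    have "(T *\<^sub>v w)$b = (\<Sum>l<n. T$$(b,l) * w$l)"
      by (rule index_mult_mat_vec_sum[OF T wc]) (use b in auto)
    also have "\<dots> = (\<Sum>l<m. T$$(b,l+k) * w$(l+k))"
      unfolding m_def by (rule sum_lessThan_shift) (use k we in auto)
    also have "\<dots> = (T' *\<^sub>v v)$(b-k)"
      by (subst index_mult_mat_vec_sum[OF T'c vc]) (use b in \<open>auto simp: we m_def T'_def\<close>)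
    also have "\<dots> = \<mu> * w$b" unfolding Tv using vc b we by (auto simp: m_def)
    finally show "(T *\<^sub>v w)$b = \<mu> * w$b" .
  qed
qed

section \<open>Schur triangularization with prescribed kernel columns\<close>

definition orthonormal :: "nat \<Rightarrow> complex vec list \<Rightarrow> bool" where
  "orthonormal n vs \<longleftrightarrow> (\<forall>v\<in>set vs. v \<in> carrier_vec n) \<and>
     (\<forall>i<length vs. \<forall>j<length vs. cinner n (vs!i) (vs!j) = (if i = j then 1 else 0))"

lemma adjoint_unitary_fixes_head_vec:
  assumes V: "unitary_mat n V"
    and Vcols: "\<forall>i<n. \<forall>j<k. V$$(i,j) = (if i = j then 1 else 0)"
    and y: "y \<in> carrier_vec n" and y0: "\<forall>a. k \<le> a \<and> a < n \<longrightarrow> y$a = 0"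
  shows "adjoint_mat V *\<^sub>v y = y"
proof (rule eq_vecI)
  have Vc: "V \<in> carrier_mat n n" using V unitary_mat_carrier by auto
  fix i assume "i < dim_vec y"
  then have i: "i < n" using y by auto
  have row: "V$$(a,i) = (if a = i then 1 else 0)" if a: "a < k" "a < n" for a
  proof -
    have "(adjoint_mat V * V) $$ (i,a) = (\<Sum>m<n. cnj (V$$(m,i)) * V$$(m,a))"
      by (subst index_mult_mat_sum[of _ n n _ n]) (use Vc i a in \<open>auto intro!: sum.cong\<close>)
    also have "\<dots> = (\<Sum>m<n. cnj (V$$(m,i)) * (if m = a then 1 else 0))"
      by (rule sum.cong[OF refl]) (use Vcols a in auto)
    finally have "cnj (V$$(a,i)) = (if i = a then 1 else 0)"
      using V i a unfolding unitary_mat_def by simp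
    then show ?thesis by (cases "a = i") (auto simp: complex_cnj_one_iff)
  qed
  have "(adjoint_mat V *\<^sub>v y) $ i = (\<Sum>a<n. cnj (V$$(a,i)) * y$a)"
    by (subst index_mult_mat_vec_sum[of _ n n]) (use Vc y i in \<open>auto intro!: sum.cong\<close>)
  also have "\<dots> = (\<Sum>a<n. (if a = i then 1 else 0) * y$a)"
  proof (rule sum.cong[OF refl])
    fix a assume a: "a \<in> {..<n}"
    show "cnj (V$$(a,i)) * y$a = (if a = i then 1 else 0) * y$a"
    proof (cases "a < k")
      case True then show ?thesis using row[OF True] a by auto
    next
      case False then show ?thesis using y0 a by auto
    qed
  qed
  also have "\<dots> = y$i" using i by simp
  finally show "(adjoint_mat V *\<^sub>v y) $ i = y $ i" .
qed (use V y in \<open>auto simp: unitary_mat_def\<close>)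

lemma index_conj_mat:
  assumes "V \<in> carrier_mat n n" "T \<in> carrier_mat n n" "i < n" "j < n"
  shows "(adjoint_mat V * T * V) $$ (i,j) = (adjoint_mat V *\<^sub>v (T *\<^sub>v col V j)) $ i"
proof -
  have "col (T * V) j = T *\<^sub>v col V j"
    by (rule col_mult2[of _ n n _ n]) (use assms in auto)
  moreover have "col (adjoint_mat V * (T * V)) j = adjoint_mat V *\<^sub>v col (T * V) j"
    by (rule col_mult2[of _ n n _ n]) (use assms in auto)
  ultimately show ?thesis
    using assms by (simp add: assoc_mult_mat[of _ n n _ n _ n] flip: index_col)
qed

lemma unitary_conj_fixes_head_columns:
  assumes T: "T \<in> carrier_mat n n" and k: "k \<le> n"
    and tri: "\<forall>j<k. \<forall>i<n. j < i \<longrightarrow> T$$(i,j) = 0"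
    and V: "unitary_mat n V" and Vcols: "\<forall>i<n. \<forall>j<k. V$$(i,j) = (if i = j then 1 else 0)"
    and j: "j < k" and i: "i < n"
  shows "(adjoint_mat V * T * V) $$ (i,j) = T $$ (i,j)"
proof -
  have Vc: "V \<in> carrier_mat n n" using V unitary_mat_carrier by auto
  have "col V j = unit_vec n j" using Vcols Vc k j by (intro eq_vecI) auto
  then have "T *\<^sub>v col V j = col T j" using mult_mat_unit_vec[OF T] j k by simp
  moreover have "adjoint_mat V *\<^sub>v col T j = col T j"
    by (rule adjoint_unitary_fixes_head_vec[OF V Vcols]) (use T j k tri in auto)
  ultimately show ?thesis using index_conj_mat[OF Vc T i, of j] i j k T by simp
qed

lemma unitary_conj_eigen_column:
  assumes T: "T \<in> carrier_mat n n" and k: "k < n"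
    and V: "unitary_mat n V" and Vcols: "\<forall>i<n. \<forall>j<k. V$$(i,j) = (if i = j then 1 else 0)"
    and Vk: "\<forall>i<n. V$$(i,k) = w$i" and w: "w \<in> carrier_vec n"
    and eig: "\<forall>a. k \<le> a \<and> a < n \<longrightarrow> (T *\<^sub>v w)$a = \<mu> * w$a"
    and i: "k \<le> i" "i < n"
  shows "(adjoint_mat V * T * V) $$ (i,k) = (if i = k then \<mu> else 0)"
proof -
  have Vc: "V \<in> carrier_mat n n" using V unitary_mat_carrier by auto
  have colVk: "col V k = w" using Vk Vc w k by (intro eq_vecI) auto
  txt \<open>Split \<open>T w = \<mu> w + y\<close> with \<open>y\<close> supported on the first \<open>k\<close> coordinates, which \<open>V\<^sup>*\<close> fixes.\<close>
  define y where "y = T *\<^sub>v w - \<mu> \<cdot>\<^sub>v w"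
  have yc: "y \<in> carrier_vec n" unfolding y_def using T w by auto
  have y0: "\<forall>a. k \<le> a \<and> a < n \<longrightarrow> y$a = 0" unfolding y_def using eig T w by auto
  have Tw: "T *\<^sub>v w = \<mu> \<cdot>\<^sub>v w + y" unfolding y_def using T w by (intro eq_vecI) auto
  have "adjoint_mat V *\<^sub>v w = col (adjoint_mat V * V) k"
    unfolding colVk[symmetric] by (rule col_mult2[symmetric, of _ n n _ n]) (use Vc k in auto)
  also have "\<dots> = unit_vec n k" using V k unfolding unitary_mat_def by simp
  finally have Vw: "adjoint_mat V *\<^sub>v w = unit_vec n k" .
  have "adjoint_mat V *\<^sub>v (T *\<^sub>v col V k) = \<mu> \<cdot>\<^sub>v (adjoint_mat V *\<^sub>v w) + adjoint_mat V *\<^sub>v y"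
    unfolding colVk Tw using Vc w yc
    by (simp add: mult_add_distrib_mat_vec[of _ n n] mult_mat_vec[of _ n n])
  also have "adjoint_mat V *\<^sub>v y = y" by (rule adjoint_unitary_fixes_head_vec[OF V Vcols yc y0])
  finally show ?thesis using index_conj_mat[OF Vc T i(2) k] i Vw yc y0 by auto
qed

definition partial_schur :: "nat \<Rightarrow> complex mat \<Rightarrow> complex vec list \<Rightarrow> nat \<Rightarrow> complex mat \<Rightarrow> bool" where
  "partial_schur n A vs k U \<longleftrightarrow> unitary_mat n U
     \<and> (\<forall>j<k. \<forall>i<n. j < i \<longrightarrow> (adjoint_mat U * A * U)$$(i,j) = 0)
     \<and> (\<forall>j<k. j < length vs \<longrightarrow> col U j = vs!j \<and> (adjoint_mat U * A * U)$$(j,j) = 0)"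

lemma kernel_vec_as_next_column:
  assumes A: "A \<in> carrier_mat n n" and U: "unitary_mat n U" and on: "orthonormal n vs"
    and ker: "\<forall>v\<in>set vs. A *\<^sub>v v = 0\<^sub>v n" and len: "length vs \<le> n" and k: "k < length vs"
    and pre: "\<forall>j<k. col U j = vs!j"
  obtains w where "w \<in> carrier_vec n" "\<forall>i<k. w$i = 0" "cinner n w w = 1"
    "(adjoint_mat U * A * U) *\<^sub>v w = 0\<^sub>v n" "U *\<^sub>v w = vs!k"
proof
  have Uc: "U \<in> carrier_mat n n" using U unitary_mat_carrier by auto
  define v where "v = vs!k"
  have vin: "v \<in> set vs" unfolding v_def using k by simp
  have vc: "v \<in> carrier_vec n" using on vin unfolding orthonormal_def by blast
  define w where "w = adjoint_mat U *\<^sub>v v"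
  show wc: "w \<in> carrier_vec n"
    unfolding w_def by (rule mult_mat_vec_carrier[of _ n n]) (use Uc vc in auto)
  show Uw: "U *\<^sub>v w = vs!k" unfolding w_def v_def by (rule unitary_mat_cancel_vec[OF U vc[unfolded v_def]])
  show "\<forall>i<k. w$i = 0"
  proof (intro allI impI)
    fix i assume i: "i < k"
    have "w$i = (\<Sum>l<n. adjoint_mat U $$ (i,l) * v$l)" unfolding w_def
      by (rule index_mult_mat_vec_sum[of _ n n]) (use Uc vc i k len in auto)
    also have "\<dots> = cinner n (col U i) v" unfolding cinner_def
      by (rule sum.cong[OF refl]) (use Uc i k len in auto)
    also have "\<dots> = 0" using pre on i k unfolding orthonormal_def v_def by auto
    finally show "w$i = 0" .
  qed
  have "cinner n w w = cinner n (U *\<^sub>v w) v"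
    using cinner_mult_mat_vec[of "adjoint_mat U" n w v] Uc vc wc unfolding w_def by simp
  also have "\<dots> = 1" unfolding Uw using on k unfolding orthonormal_def v_def by auto
  finally show "cinner n w w = 1" .
  have "(adjoint_mat U * A * U) *\<^sub>v w = adjoint_mat U *\<^sub>v (A *\<^sub>v (U *\<^sub>v w))"
    using Uc A wc by (simp add: assoc_mult_mat_vec[of _ n n _ n] mult_carrier_mat[of _ n n _ n])
  also have "\<dots> = 0\<^sub>v n" unfolding Uw using ker k Uc by auto
  finally show "(adjoint_mat U * A * U) *\<^sub>v w = 0\<^sub>v n" .
qed

lemma exists_next_schur_column:
  assumes A: "A \<in> carrier_mat n n" and on: "orthonormal n vs"
    and ker: "\<forall>v\<in>set vs. A *\<^sub>v v = 0\<^sub>v n" and len: "length vs \<le> n"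
    and U: "unitary_mat n U" and k: "k < n" and pre: "\<forall>j<k. j < length vs \<longrightarrow> col U j = vs!j"
  obtains w \<mu> where "w \<in> carrier_vec n" "\<forall>i<k. w$i = 0" "cinner n w w = 1"
    "\<forall>a. k \<le> a \<and> a < n \<longrightarrow> ((adjoint_mat U * A * U) *\<^sub>v w)$a = \<mu> * w$a"
    "k < length vs \<longrightarrow> U *\<^sub>v w = vs!k \<and> \<mu> = 0"
proof (cases "k < length vs")
  case True
  moreover have "\<forall>j<k. col U j = vs!j" using pre True by simp
  ultimately obtain w where "w \<in> carrier_vec n" "\<forall>i<k. w$i = 0" "cinner n w w = 1"
    "(adjoint_mat U * A * U) *\<^sub>v w = 0\<^sub>v n" "U *\<^sub>v w = vs!k"
    by (rule kernel_vec_as_next_column[OF A U on ker len])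
  then show thesis using that[of w 0] by simp
next
  case False
  have "adjoint_mat U * A * U \<in> carrier_mat n n" using A U unitary_mat_carrier by fastforce
  then obtain w \<mu> where "w \<in> carrier_vec n" "\<forall>i<k. w$i = 0" "cinner n w w = 1"
    "\<forall>a. k \<le> a \<and> a < n \<longrightarrow> ((adjoint_mat U * A * U) *\<^sub>v w)$a = \<mu> * w$a"
    using exists_trailing_eigenvector[OF _ k] by blast
  then show thesis using that False by blast
qed

lemma partial_schur_mult:
  assumes A: "A \<in> carrier_mat n n" and U: "partial_schur n A vs k U" and k: "k < n"
    and V: "unitary_mat n V" and Vcols: "\<forall>i<n. \<forall>j<k. V$$(i,j) = (if i = j then 1 else 0)"
    and Vk: "\<forall>i<n. V$$(i,k) = w$i" and wc: "w \<in> carrier_vec n"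
    and eig: "\<forall>a. k \<le> a \<and> a < n \<longrightarrow> ((adjoint_mat U * A * U) *\<^sub>v w)$a = \<mu> * w$a"
    and wpre: "k < length vs \<longrightarrow> U *\<^sub>v w = vs!k \<and> \<mu> = 0"
  shows "partial_schur n A vs (Suc k) (U * V)"
proof -
  have Uu: "unitary_mat n U" and tri: "\<forall>j<k. \<forall>i<n. j < i \<longrightarrow> (adjoint_mat U * A * U)$$(i,j) = 0"
    and pre: "\<forall>j<k. j < length vs \<longrightarrow> col U j = vs!j \<and> (adjoint_mat U * A * U)$$(j,j) = 0"
    using U unfolding partial_schur_def by auto
  have Uc: "U \<in> carrier_mat n n" and Vc: "V \<in> carrier_mat n n"
    using Uu V unitary_mat_carrier by auto
  define T where "T = adjoint_mat U * A * U"
  have Tc: "T \<in> carrier_mat n n" unfolding T_def using Uc A by auto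
  have T1: "adjoint_mat (U * V) * A * (U * V) = adjoint_mat V * T * V"
    unfolding T_def using Uc Vc A
    by (simp add: adjoint_mat_mult[OF Uc Vc] assoc_mult_mat[of _ n n _ n _ n]
        mult_carrier_mat[of _ n n _ n])
  have colUV: "col (U * V) j = U *\<^sub>v col V j" if "j < n" for j
    by (rule col_mult2[of _ n n _ n]) (use Uc Vc that in auto)
  have colVk: "col V k = w" using Vk Vc wc k by (intro eq_vecI) auto
  have colVj: "col V j = unit_vec n j" if "j < k" for j
    using Vcols Vc k that by (intro eq_vecI) auto
  note head = unitary_conj_fixes_head_columns[OF Tc less_imp_le[OF k] tri[folded T_def] V Vcols]
  note eigcol = unitary_conj_eigen_column[OF Tc k V Vcols Vk wc eig[folded T_def]]
  show ?thesis
    unfolding partial_schur_def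
  proof (intro conjI allI impI)
    show "unitary_mat n (U * V)" by (rule unitary_mat_mult[OF Uu V])
    fix j
    show "(adjoint_mat (U * V) * A * (U * V)) $$ (i,j) = 0" if ij: "j < Suc k" "i < n" "j < i" for i
    proof (cases "j < k")
      case True then show ?thesis using head[OF True ij(2)] tri ij unfolding T1 T_def by simp
    next
      case False then have "j = k" using ij(1) by simp
      then show ?thesis using eigcol[of i] ij unfolding T1 by simp
    qed
    assume j: "j < Suc k" and jl: "j < length vs"
    show "col (U * V) j = vs!j"
    proof (cases "j < k")
      case True
      then show ?thesis using pre jl k colUV colVj mult_mat_unit_vec[OF Uc, of j] by simp
    next
      case False then have "j = k" using j by simp
      then show ?thesis using wpre jl k colUV colVk by simp
    qed
    show "(adjoint_mat (U * V) * A * (U * V)) $$ (j,j) = 0"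
    proof (cases "j < k")
      case True then show ?thesis using head[OF True, of j] pre jl k unfolding T1 T_def by simp
    next
      case False then have "j = k" using j by simp
      then show ?thesis using eigcol[of k] wpre jl k unfolding T1 by simp
    qed
  qed
qed

lemma partial_schur_Suc:
  assumes A: "A \<in> carrier_mat n n" and on: "orthonormal n vs"
    and ker: "\<forall>v\<in>set vs. A *\<^sub>v v = 0\<^sub>v n" and len: "length vs \<le> n"
    and k: "k < n" and U: "partial_schur n A vs k U"
  shows "\<exists>U'. partial_schur n A vs (Suc k) U'"
proof -
  have Uu: "unitary_mat n U" and pre: "\<forall>j<k. j < length vs \<longrightarrow> col U j = vs!j"
    using U unfolding partial_schur_def by auto
  obtain w \<mu> where wc: "w \<in> carrier_vec n" and w0: "\<forall>i<k. w$i = 0" and nw: "cinner n w w = 1"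
    and eig: "\<forall>a. k \<le> a \<and> a < n \<longrightarrow> ((adjoint_mat U * A * U) *\<^sub>v w)$a = \<mu> * w$a"
    and wpre: "k < length vs \<longrightarrow> U *\<^sub>v w = vs!k \<and> \<mu> = 0"
    by (rule exists_next_schur_column[OF A on ker len Uu k pre])
  obtain V where "unitary_mat n V" "\<forall>i<n. \<forall>j<k. V$$(i,j) = (if i = j then 1 else 0)"
    "\<forall>i<n. V$$(i,k) = w$i"
    using unitary_mat_completion[OF k wc w0 nw] by blast
  then show ?thesis using partial_schur_mult[OF A U k _ _ _ wc eig wpre] by blast
qed

lemma unitary_schur_with_kernel_columns:
  assumes A: "A \<in> carrier_mat n n" and on: "orthonormal n vs"
    and ker: "\<forall>v\<in>set vs. A *\<^sub>v v = 0\<^sub>v n" and len: "length vs \<le> n"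
  shows "\<exists>U. unitary_mat n U \<and> upper_triangular (adjoint_mat U * A * U) \<and>
     (\<forall>j<length vs. col U j = vs!j \<and> (adjoint_mat U * A * U)$$(j,j) = 0)"
proof -
  have "\<exists>U. partial_schur n A vs k U" if "k \<le> n" for k
    using that
  proof (induction k)
    case 0
    show ?case by (rule exI[of _ "1\<^sub>m n"]) (simp add: partial_schur_def unitary_mat_one)
  next
    case (Suc k)
    then obtain U where "partial_schur n A vs k U" by auto
    then show ?case using partial_schur_Suc[OF A on ker len] Suc.prems by simp
  qed
  then obtain U where Uu: "unitary_mat n U"
    and tri: "\<forall>j<n. \<forall>i<n. j < i \<longrightarrow> (adjoint_mat U * A * U)$$(i,j) = 0"
    and pre: "\<forall>j<n. j < length vs \<longrightarrow> col U j = vs!j \<and> (adjoint_mat U * A * U)$$(j,j) = 0"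
    unfolding partial_schur_def by blast
  have "adjoint_mat U * A * U \<in> carrier_mat n n" using A unitary_mat_carrier[OF Uu] by auto
  then have "upper_triangular (adjoint_mat U * A * U)" unfolding upper_triangular_def using tri by auto
  then show ?thesis using Uu pre len by (intro exI[of _ U]) auto
qed

section \<open>Characteristic polynomials\<close>

lemma sum_of_nat_count_list_mult:
  fixes g :: "'a \<Rightarrow> 'b::semiring_1"
  assumes "set xs \<subseteq> X" "finite X"
  shows "(\<Sum>x\<in>X. of_nat (count_list xs x) * g x) = sum_list (map g xs)"
  using assms(1)
proof (induction xs)
  case (Cons a xs)
  have "(\<Sum>x\<in>X. of_nat (count_list (a#xs) x) * g x)
      = (\<Sum>x\<in>X. of_nat (count_list xs x) * g x + (if x = a then g x else 0))"
    by (rule sum.cong) (auto simp: algebra_simps)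
  also have "\<dots> = (\<Sum>x\<in>X. of_nat (count_list xs x) * g x) + g a"
    using Cons.prems assms(2) by (simp add: sum.distrib)
  finally show ?case using Cons by (simp add: add.commute)
qed simp

lemma order_prod_linear:
  "order \<mu> (\<Prod>a\<leftarrow>as. [:- a, 1::'a::idom:]) = count_list as \<mu>"
proof (induction as)
  case (Cons a as)
  have nz: "(\<Prod>a\<leftarrow>as. [:- a, 1::'a:]) \<noteq> 0"
    by (simp add: prod_list_zero_iff image_iff pCons_eq_0_iff)
  have "order \<mu> (\<Prod>a\<leftarrow>a#as. [:- a, 1:]) = order \<mu> [:- a, 1:] + order \<mu> (\<Prod>a\<leftarrow>as. [:- a, 1:])"
    using nz by (simp add: order_mult del: mult_pCons_left)
  also have "order \<mu> [:- a, 1:] = (if \<mu> = a then 1 else 0)"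
    by (cases "\<mu> = a") (auto simp: order_linear intro!: order_0I)
  finally show ?case using Cons by simp
qed simp

lemma char_poly_similar_upper_triangular:
  fixes A T :: "complex mat"
  assumes "similar_mat A T" "T \<in> carrier_mat n n" "upper_triangular T"
  shows "char_poly A = (\<Prod>a\<leftarrow>diag_mat T. [:- a, 1:])"
  using char_poly_similar[OF assms(1)] char_poly_upper_triangular[OF assms(2,3)] by simp

lemma diag_mat_eq_map: "T \<in> carrier_mat n n \<Longrightarrow> diag_mat T = map (\<lambda>i. T $$ (i,i)) [0..<n]"
  unfolding diag_mat_def by auto

lemma sum_roots_char_poly_similar_upper_triangular:
  fixes A T :: "complex mat"
  assumes sim: "similar_mat A T" and T: "T \<in> carrier_mat n n" and ut: "upper_triangular T"
  shows "(\<Sum>\<mu>\<in>{\<mu>. poly (char_poly A) \<mu> = 0}. real (order \<mu> (char_poly A)) * cmod \<mu>)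
      = (\<Sum>i<n. cmod (T $$ (i,i)))"
proof -
  let ?p = "\<Prod>a\<leftarrow>diag_mat T. [:- a, 1::complex:]"
  have cp: "char_poly A = ?p" by (rule char_poly_similar_upper_triangular[OF sim T ut])
  have fin: "finite {\<mu>. poly ?p \<mu> = 0}"
    by (rule poly_roots_finite) (simp add: prod_list_zero_iff image_iff pCons_eq_0_iff)
  have "poly (\<Prod>a\<leftarrow>as. [:- a, 1:]) x = 0" if "x \<in> set as" for x :: complex and as
    using that by (induction as) auto
  then have sub: "set (diag_mat T) \<subseteq> {\<mu>. poly ?p \<mu> = 0}" by blast
  have "(\<Sum>\<mu>\<in>{\<mu>. poly ?p \<mu> = 0}. real (order \<mu> ?p) * cmod \<mu>) = sum_list (map cmod (diag_mat T))"
    unfolding order_prod_linear by (rule sum_of_nat_count_list_mult[OF sub fin])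
  also have "\<dots> = (\<Sum>i<n. cmod (T $$ (i,i)))"
    by (simp add: diag_mat_eq_map[OF T] sum_list_distinct_conv_sum_set lessThan_atLeast0 comp_def)
  finally show ?thesis unfolding cp .
qed

lemma order_zero_parity_of_reflection:
  fixes p :: "complex poly"
  assumes p: "p \<noteq> 0" and refl: "pcompose p [:0, -1:] = Polynomial.smult ((-1)^n) p"
  shows "even (order 0 p) \<longleftrightarrow> even n"
proof -
  define k where "k = order 0 p"
  have "\<not> monom 1 (Suc k) dvd p" using monom_1_dvd_iff[OF p, of "Suc k"] unfolding k_def by simp
  moreover have "monom 1 k dvd p" using monom_1_dvd_iff[OF p, of k] unfolding k_def by simp
  ultimately have ck: "coeff p k \<noteq> 0" unfolding monom_1_dvd_iff' by (auto simp: less_Suc_eq)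
  have "(-1)^k * coeff p k = (-1)^n * coeff p k"
    using arg_cong[OF refl, of "\<lambda>q. coeff q k"] by (simp add: coeff_pcompose_linear)
  then have "(-1::complex)^k = (-1)^n" using ck by simp
  then have "even k \<longleftrightarrow> even n" by (cases "even k"; cases "even n") auto
  then show ?thesis unfolding k_def .
qed

lemma char_poly_skew_reflection:
  fixes M :: "complex mat"
  assumes M: "M \<in> carrier_mat n n" and skew: "\<forall>i<n. \<forall>j<n. M$$(j,i) = - M$$(i,j)"
  shows "pcompose (char_poly M) [:0, -1:] = Polynomial.smult ((-1)^n) (char_poly M)"
proof (rule poly_eq_poly_eq_iff[THEN iffD1], rule ext)
  fix x :: complex
  let ?X = "- char_matrix M x"
  have Xc: "?X \<in> carrier_mat n n" using M by simp
  have eq: "- char_matrix M (-x) = (-1) \<cdot>\<^sub>m transpose_mat ?X"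
  proof (rule eq_matI)
    fix i j assume "i < dim_row ((-1) \<cdot>\<^sub>m transpose_mat ?X)" "j < dim_col ((-1) \<cdot>\<^sub>m transpose_mat ?X)"
    then have ij: "i < n" "j < n" using M by (auto simp: char_matrix_def)
    show "(- char_matrix M (-x)) $$ (i,j) = ((-1) \<cdot>\<^sub>m transpose_mat ?X) $$ (i,j)"
      using ij M skew[rule_format, OF ij] unfolding char_matrix_def by auto
  qed (use M in \<open>auto simp: char_matrix_def\<close>)
  have "poly (char_poly M) (-x) = det (- char_matrix M (-x))" by (rule char_poly_matrix[OF M])
  also have "\<dots> = (-1)^n * det (transpose_mat ?X)" unfolding eq using Xc by (simp add: carrier_matD)
  also have "det (transpose_mat ?X) = poly (char_poly M) x"
    using det_transpose[OF Xc] char_poly_matrix[OF M] by simp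
  finally show "poly (pcompose (char_poly M) [:0, -1:]) x = poly (Polynomial.smult ((-1)^n) (char_poly M)) x"
    by (simp add: poly_pcompose)
qed

lemma char_poly_nonzero: "A \<in> carrier_mat n n \<Longrightarrow> char_poly A \<noteq> (0 :: 'a::field poly)"
  using degree_monic_char_poly[of A n] by auto

lemma order_zero_char_poly_similar_upper_triangular:
  fixes A T :: "complex mat"
  assumes sim: "similar_mat A T" and T: "T \<in> carrier_mat n n" and ut: "upper_triangular T"
    and q: "q \<le> n" and zero: "\<forall>i<n. T$$(i,i) = 0 \<longleftrightarrow> i < q"
  shows "order 0 (char_poly A) = q"
proof -
  have "filter (\<lambda>i. 0 = T$$(i,i)) [0..<q] = [0..<q]" "filter (\<lambda>i. 0 = T$$(i,i)) [q..<n] = []"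
    using zero q by (auto simp: filter_empty_conv)
  moreover have "[0..<n] = [0..<q] @ [q..<n]" using q upt_add_eq_append[of 0 q "n-q"] by simp
  ultimately have "length (filter (\<lambda>i. 0 = T$$(i,i)) [0..<n]) = q" by simp
  then show ?thesis
    unfolding char_poly_similar_upper_triangular[OF sim T ut] order_prod_linear
      count_list_eq_length_filter diag_mat_eq_map[OF T] filter_map by (simp add: comp_def)
qed

section \<open>Components and the skew Laplacian\<close>

lemma components_eq_Image:
  "components n A = (\<lambda>v. (A \<union> A\<inverse>)\<^sup>* `` {v}) ` {0..<n}"
  unfolding components_def quotient_def by auto

lemma component_subset:
  assumes G: "simple_digraph n A" and C: "C \<in> components n A"
  shows "C \<subseteq> {..<n}"
proof
  fix x assume "x \<in> C"
  then obtain v where v: "v < n" and vx: "(v,x) \<in> (A \<union> A\<inverse>)\<^sup>*"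
    using C unfolding components_eq_Image by auto
  from vx show "x \<in> {..<n}"
    by (induction rule: rtrancl_induct) (use v G in \<open>auto simp: simple_digraph_def\<close>)
qed

lemma component_nonempty: "C \<in> components n A \<Longrightarrow> C \<noteq> {}"
  unfolding components_eq_Image by auto

lemma component_arc_iff:
  assumes C: "C \<in> components n A" and a: "(i,j) \<in> A"
  shows "i \<in> C \<longleftrightarrow> j \<in> C"
proof -
  obtain v where C: "C = (A \<union> A\<inverse>)\<^sup>* `` {v}" using C unfolding components_eq_Image by auto
  have "(i,j) \<in> (A \<union> A\<inverse>)\<^sup>*" "(j,i) \<in> (A \<union> A\<inverse>)\<^sup>*" using a by auto
  then show ?thesis unfolding C by (meson Image_singleton_iff rtrancl_trans)
qed

lemma components_eqI:
  assumes "C1 \<in> components n A" "C2 \<in> components n A" "x \<in> C1" "x \<in> C2"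
  shows "C1 = C2"
proof -
  have "sym ((A \<union> A\<inverse>)\<^sup>*)" by (intro sym_rtrancl sym_Un_converse)
  moreover have "trans ((A \<union> A\<inverse>)\<^sup>*)" by (rule trans_rtrancl)
  ultimately show ?thesis
    using assms unfolding components_eq_Image by (auto dest: symD transD)
qed

lemma card_components_less:
  assumes G: "simple_digraph n A" and a: "(i,j) \<in> A"
  shows "card (components n A) < n"
proof -
  have ij: "i < n" "j < n" "i \<noteq> j" using G a unfolding simple_digraph_def by auto
  have "(A \<union> A\<inverse>)\<^sup>* `` {i} = (A \<union> A\<inverse>)\<^sup>* `` {j}"
    using a by (auto intro: rtrancl_trans converse_rtrancl_into_rtrancl)
  then have "\<not> inj_on (\<lambda>v. (A \<union> A\<inverse>)\<^sup>* `` {v}) {0..<n}"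
    using ij unfolding inj_on_def by fastforce
  then have "card ((\<lambda>v. (A \<union> A\<inverse>)\<^sup>* `` {v}) ` {0..<n}) \<noteq> n"
    using eq_card_imp_inj_on[of "{0..<n}"] by auto
  then show ?thesis
    unfolding components_eq_Image using card_image_le[of "{0..<n}"] le_neq_implies_less by fastforce
qed

lemma components_no_arcs: "components n {} = (\<lambda>v. {v}) ` {0..<n}"
  unfolding components_eq_Image by simp

definition deg_diff :: "(nat \<times> nat) set \<Rightarrow> nat \<Rightarrow> real" where
  "deg_diff A i = real (outdeg A i) - real (indeg A i)"

definition skew_sign :: "(nat \<times> nat) set \<Rightarrow> nat \<Rightarrow> nat \<Rightarrow> real" where
  "skew_sign A i j = (if (i,j) \<in> A then 1 else if (j,i) \<in> A then -1 else 0)"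

lemma index_skew_lap:
  "i < n \<Longrightarrow> j < n \<Longrightarrow>
    skew_lap n A $$ (i,j) = complex_of_real ((if i = j then deg_diff A i else 0) - skew_sign A i j)"
  unfolding skew_lap_def Dtilde_def skew_adj_def deg_diff_def skew_sign_def by auto

lemma skew_lap_carrier [simp]: "skew_lap n A \<in> carrier_mat n n"
  unfolding skew_lap_def Dtilde_def skew_adj_def by auto

lemma dim_skew_lap [simp]: "dim_row (skew_lap n A) = n" "dim_col (skew_lap n A) = n"
  unfolding skew_lap_def Dtilde_def skew_adj_def by auto

lemma sum_lessThan_indicator:
  fixes n :: nat
  assumes "S \<subseteq> {..<n}"
  shows "(\<Sum>j<n. if j \<in> S then 1 else 0) = (of_nat (card S) :: 'a::semiring_1)"
proof -
  have "(\<Sum>j<n. if j \<in> S then 1 else 0) = (\<Sum>j\<in>{..<n} \<inter> S. 1 :: 'a)"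
    by (rule sum.inter_restrict[symmetric]) simp
  also have "{..<n} \<inter> S = S" using assms by auto
  finally show ?thesis by simp
qed

lemma skew_sign_antisym: "simple_digraph n A \<Longrightarrow> skew_sign A j i = - skew_sign A i j"
  unfolding skew_sign_def simple_digraph_def by auto

lemma sum_skew_sign:
  assumes G: "simple_digraph n A" and k: "k < n"
  shows "(\<Sum>j<n. skew_sign A k j) = deg_diff A k"
proof -
  have sub: "{j. (k,j) \<in> A} \<subseteq> {..<n}" "{j. (j,k) \<in> A} \<subseteq> {..<n}"
    using G unfolding simple_digraph_def by auto
  have "(\<Sum>j<n. skew_sign A k j)
      = (\<Sum>j<n. (if j \<in> {j. (k,j) \<in> A} then 1 else 0) - (if j \<in> {j. (j,k) \<in> A} then 1 else 0))"
    by (rule sum.cong[OF refl]) (use G in \<open>auto simp: skew_sign_def simple_digraph_def\<close>)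
  also have "\<dots> = real (outdeg A k) - real (indeg A k)"
    unfolding sum_subtractf outdeg_def indeg_def sum_lessThan_indicator[OF sub(1)]
      sum_lessThan_indicator[OF sub(2)] ..
  finally show ?thesis unfolding deg_diff_def .
qed

lemma frobenius_sq_skew_lap:
  assumes G: "simple_digraph n A"
  shows "frobenius_sq (skew_lap n A) = 2 * M1 n A"
proof -
  have A: "A \<subseteq> {..<n} \<times> {..<n}" "A \<inter> A\<inverse> = {}"
    using G unfolding simple_digraph_def by auto
  have sq: "((if i = j then deg_diff A i else 0) - skew_sign A i j)^2
      = (if i = j then (deg_diff A i)^2 else 0) + (if (i,j) \<in> A \<union> A\<inverse> then 1 else 0)" for i j
    using G unfolding skew_sign_def simple_digraph_def by (auto simp: power2_eq_square)
  have "frobenius_sq (skew_lap n A)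
      = (\<Sum>i<n. \<Sum>j<n. (if i = j then (deg_diff A i)^2 else 0) + (if (i,j) \<in> A \<union> A\<inverse> then 1 else 0))"
    unfolding frobenius_sq_def
    by (auto simp: index_skew_lap sq simp del: of_real_diff Un_iff intro!: sum.cong)
  also have "\<dots> = (\<Sum>i<n. (deg_diff A i)^2) + (\<Sum>p\<in>{..<n} \<times> {..<n}. if p \<in> A \<union> A\<inverse> then 1 else 0)"
    by (simp add: sum.distrib sum.cartesian_product del: Un_iff)
  also have "(\<Sum>p\<in>{..<n} \<times> {..<n}. if p \<in> A \<union> A\<inverse> then 1 else 0) = real (card (A \<union> A\<inverse>))"
  proof -
    have "{..<n} \<times> {..<n} \<inter> (A \<union> A\<inverse>) = A \<union> A\<inverse>" using A(1) by auto
    then show ?thesis by (simp add: sum.inter_restrict[symmetric] del: Un_iff)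
  qed
  also have "card (A \<union> A\<inverse>) = 2 * card A"
    using A finite_subset[OF A(1)] by (simp add: card_Un_disjoint card_inverse)
  finally show ?thesis unfolding M1_def deg_diff_def by simp
qed

lemma skew_lap_mult_indicator:
  assumes G: "simple_digraph n A" and closed: "\<forall>(i,j) \<in> A. i \<in> S \<longleftrightarrow> j \<in> S"
  shows "skew_lap n A *\<^sub>v vec n (\<lambda>i. if i \<in> S then c else 0) = 0\<^sub>v n"
proof (rule eq_vecI)
  define x where "x = vec n (\<lambda>i. if i \<in> S then c else 0)"
  have xc: "x \<in> carrier_vec n" unfolding x_def by auto
  fix k assume "k < dim_vec (0\<^sub>v n :: complex vec)"
  then have k: "k < n" by auto
  have skew_x: "complex_of_real (skew_sign A k j) * x$j = complex_of_real (skew_sign A k j) * x$k"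
    if j: "j < n" for j
  proof (cases "skew_sign A k j = 0")
    case False
    then have "(k,j) \<in> A \<or> (j,k) \<in> A" unfolding skew_sign_def by (auto split: if_splits)
    then show ?thesis using closed j k unfolding x_def by auto
  qed simp
  have "(skew_lap n A *\<^sub>v x) $ k = (\<Sum>j<n. skew_lap n A $$ (k,j) * x$j)"
    by (rule index_mult_mat_vec_sum[OF skew_lap_carrier xc k])
  also have "\<dots> = (\<Sum>j<n. (if k = j then complex_of_real (deg_diff A k) * x$k else 0)
      - complex_of_real (skew_sign A k j) * x$k)"
  proof (rule sum.cong[OF refl])
    fix j assume j: "j \<in> {..<n}"
    show "skew_lap n A $$ (k,j) * x$j = (if k = j then complex_of_real (deg_diff A k) * x$k else 0)
      - complex_of_real (skew_sign A k j) * x$k"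
      using skew_x[of j] j k by (auto simp: index_skew_lap algebra_simps)
  qed
  also have "\<dots> = complex_of_real (deg_diff A k - (\<Sum>j<n. skew_sign A k j)) * x$k"
    using k by (simp add: sum_subtractf sum_distrib_right sum_distrib_left algebra_simps)
  also have "\<dots> = 0" using sum_skew_sign[OF G k] by simp
  finally show "(skew_lap n A *\<^sub>v vec n (\<lambda>i. if i \<in> S then c else 0)) $ k = 0\<^sub>v n $ k"
    using k unfolding x_def by simp
qed auto

lemma commutator_diag_minus_antisym:
  fixes d :: "nat \<Rightarrow> real" and s :: "nat \<Rightarrow> nat \<Rightarrow> real"
  assumes anti: "\<And>a b. s b a = - s a b" and i: "i < n" and j: "j < n"
  defines "L \<equiv> \<lambda>a b. (if a = b then d a else 0) - s a b"
  shows "(\<Sum>l<n. L i l * L j l) - (\<Sum>l<n. L l i * L l j) = 2 * (d i - d j) * s i j"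
proof -
  note delta = if_distrib[of "\<lambda>x. x * _"] if_distrib[of "\<lambda>x. _ * x"]
  have e1: "(\<Sum>l<n. L i l * L j l) = (\<Sum>l<n. (if i = l then d i else 0) * (if j = l then d j else 0))
     - (\<Sum>l<n. (if i = l then d i else 0) * s j l) - (\<Sum>l<n. s i l * (if j = l then d j else 0))
     + (\<Sum>l<n. s i l * s j l)"
    unfolding L_def by (simp add: algebra_simps sum.distrib sum_subtractf)
  have e2: "(\<Sum>l<n. L l i * L l j) = (\<Sum>l<n. (if l = i then d l else 0) * (if l = j then d l else 0))
     - (\<Sum>l<n. (if l = i then d l else 0) * s l j) - (\<Sum>l<n. s l i * (if l = j then d l else 0))
     + (\<Sum>l<n. s l i * s l j)"
    unfolding L_def by (simp add: algebra_simps sum.distrib sum_subtractf)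
  have e3: "(\<Sum>l<n. s l i * s l j) = (\<Sum>l<n. s i l * s j l)"
    by (rule sum.cong[OF refl]) (subst (1 2) anti, simp)
  have e4: "(\<Sum>l<n. (if l = i then d l else 0) * (if l = j then d l else 0))
      = (\<Sum>l<n. (if i = l then d i else 0) * (if j = l then d j else 0))"
    by (rule sum.cong) auto
  have e5: "(\<Sum>l<n. (if l = i then d l else 0) * s l j) = d i * s i j"
    and e6: "(\<Sum>l<n. s l i * (if l = j then d l else 0)) = s j i * d j"
    and e7: "(\<Sum>l<n. (if i = l then d i else 0) * s j l) = d i * s j i"
    and e8: "(\<Sum>l<n. s i l * (if j = l then d j else 0)) = s i j * d j"
    using i j by (simp_all add: delta cong: if_cong)
  show ?thesis unfolding e1 e2 e3 e4 e5 e6 e7 e8 using anti[of i j] by (simp add: algebra_simps)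
qed

lemma index_skew_lap_commutator:
  assumes G: "simple_digraph n A" and ij: "i < n" "j < n"
  shows "(skew_lap n A * adjoint_mat (skew_lap n A)) $$ (i,j) - (adjoint_mat (skew_lap n A) * skew_lap n A) $$ (i,j)
    = complex_of_real (2 * (deg_diff A i - deg_diff A j) * skew_sign A i j)"
proof -
  let ?X = "skew_lap n A"
  let ?L = "\<lambda>a b. (if a = b then deg_diff A a else 0) - skew_sign A a b"
  have "(?X * adjoint_mat ?X) $$ (i,j) = (\<Sum>l<n. ?X $$ (i,l) * adjoint_mat ?X $$ (l,j))"
    by (rule index_mult_mat_sum[of _ n n _ n]) (use ij in auto)
  also have "\<dots> = complex_of_real (\<Sum>l<n. ?L i l * ?L j l)"
    unfolding of_real_sum
    by (rule sum.cong[OF refl]) (use ij in \<open>auto simp: index_skew_lap simp del: of_real_diff\<close>)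
  finally have a: "(?X * adjoint_mat ?X) $$ (i,j) = complex_of_real (\<Sum>l<n. ?L i l * ?L j l)" .
  have "(adjoint_mat ?X * ?X) $$ (i,j) = (\<Sum>l<n. adjoint_mat ?X $$ (i,l) * ?X $$ (l,j))"
    by (rule index_mult_mat_sum[of _ n n _ n]) (use ij in auto)
  also have "\<dots> = complex_of_real (\<Sum>l<n. ?L l i * ?L l j)"
    unfolding of_real_sum
    by (rule sum.cong[OF refl]) (use ij in \<open>auto simp: index_skew_lap simp del: of_real_diff\<close>)
  finally have b: "(adjoint_mat ?X * ?X) $$ (i,j) = complex_of_real (\<Sum>l<n. ?L l i * ?L l j)" .
  show ?thesis
    unfolding a b of_real_diff[symmetric]
    using commutator_diag_minus_antisym[of "skew_sign A", OF skew_sign_antisym[OF G] ij] by simp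
qed

lemma eulerian_if_skew_lap_normal:
  assumes G: "simple_digraph n A"
    and normal: "skew_lap n A * adjoint_mat (skew_lap n A) = adjoint_mat (skew_lap n A) * skew_lap n A"
  shows "\<forall>i<n. deg_diff A i = 0"
proof -
  have nm: "(deg_diff A i - deg_diff A j) * skew_sign A i j = 0" if ij: "i < n" "j < n" for i j
    using index_skew_lap_commutator[OF G ij] normal by simp
  txt \<open>Summing \<open>d\<^sub>i s\<^sub>i\<^sub>j = d\<^sub>j s\<^sub>i\<^sub>j\<close> over all \<open>i, j\<close> gives \<open>\<Sum> d\<^sub>i\<^sup>2 = - \<Sum> d\<^sub>j\<^sup>2\<close>.\<close>
  have "(\<Sum>i<n. (deg_diff A i)^2) = (\<Sum>i<n. \<Sum>j<n. deg_diff A i * skew_sign A i j)"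
    by (rule sum.cong[OF refl])
      (simp add: sum_distrib_left[symmetric] sum_skew_sign[OF G] power2_eq_square)
  also have "\<dots> = (\<Sum>i<n. \<Sum>j<n. deg_diff A j * skew_sign A i j)"
    using nm by (intro sum.cong refl) (simp add: algebra_simps)
  also have "\<dots> = (\<Sum>j<n. \<Sum>i<n. deg_diff A j * skew_sign A i j)" by (rule sum.swap)
  also have "\<dots> = (\<Sum>j<n. -((deg_diff A j)^2))"
  proof (rule sum.cong[OF refl])
    fix j assume j: "j \<in> {..<n}"
    have "(\<Sum>i<n. deg_diff A j * skew_sign A i j) = - deg_diff A j * (\<Sum>i<n. skew_sign A j i)"
      by (simp add: sum_distrib_left skew_sign_antisym[OF G, of j])
    then show "(\<Sum>i<n. deg_diff A j * skew_sign A i j) = -((deg_diff A j)^2)"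
      using sum_skew_sign[OF G, of j] j by (simp add: power2_eq_square)
  qed
  finally have "(\<Sum>i<n. (deg_diff A i)^2) = 0" by (simp add: sum_negf)
  then show ?thesis by (simp add: sum_nonneg_eq_0_iff)
qed

section \<open>The equality case\<close>

definition unit_indicator :: "nat \<Rightarrow> nat set \<Rightarrow> complex vec" where
  "unit_indicator n S = vec n (\<lambda>i. if i \<in> S then complex_of_real (1 / sqrt (real (card S))) else 0)"

lemma unit_indicator_carrier [simp]: "unit_indicator n S \<in> carrier_vec n"
  unfolding unit_indicator_def by auto

lemma index_unit_indicator:
  "i < n \<Longrightarrow> unit_indicator n S $ i = (if i \<in> S then complex_of_real (1 / sqrt (real (card S))) else 0)"
  unfolding unit_indicator_def by auto

lemma cinner_unit_indicator_self:
  assumes S: "S \<subseteq> {..<n}" "S \<noteq> {}"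
  shows "cinner n (unit_indicator n S) (unit_indicator n S) = 1"
proof -
  have cS: "real (card S) > 0" using S finite_subset[OF S(1)] by (simp add: card_gt_0_iff)
  define r where "r = 1 / sqrt (real (card S))"
  have rr: "r * r = 1 / real (card S)" unfolding r_def using cS by (simp add: field_simps)
  have "cinner n (unit_indicator n S) (unit_indicator n S)
      = complex_of_real (\<Sum>l<n. (if l \<in> S then 1 else 0) * (r * r))"
    unfolding cinner_def of_real_sum
    by (intro sum.cong refl) (auto simp: index_unit_indicator r_def[symmetric] simp flip: of_real_mult)
  also have "(\<Sum>l<n. (if l \<in> S then 1 else 0) * (r * r)) = real (card S) * (1 / real (card S))"
    unfolding sum_distrib_right[symmetric] rr using S(1) by (simp add: sum.If_cases Int_absorb1)
  also have "\<dots> = 1" using cS by simp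
  finally show ?thesis by simp
qed

lemma cinner_unit_indicator_disjoint:
  "S1 \<inter> S2 = {} \<Longrightarrow> cinner n (unit_indicator n S1) (unit_indicator n S2) = 0"
  unfolding cinner_def by (rule sum.neutral) (auto simp: index_unit_indicator)

lemma cinner_unit_indicator_const:
  assumes S: "S \<subseteq> {..<n}" and c: "\<forall>v\<in>S. x$v = c"
  shows "cinner n (unit_indicator n S) x = complex_of_real (1 / sqrt (real (card S))) * of_nat (card S) * c"
proof -
  have "cinner n (unit_indicator n S) x = (\<Sum>l<n. complex_of_real (1 / sqrt (real (card S))) * (if l \<in> S then c else 0))"
    unfolding cinner_def using c by (intro sum.cong refl) (auto simp: index_unit_indicator)
  also have "\<dots> = complex_of_real (1 / sqrt (real (card S))) * (\<Sum>l<n. if l \<in> S then 1 else 0) * c"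
    by (simp add: sum_distrib_left sum_distrib_right) (intro sum.cong refl, simp)
  finally show ?thesis using sum_lessThan_indicator[OF S, where 'a=complex] by simp
qed

lemma orthonormal_unit_indicators:
  assumes sub: "\<forall>S\<in>set Ss. S \<subseteq> {..<n} \<and> S \<noteq> {}" and dist: "distinct Ss"
    and disj: "\<forall>S\<in>set Ss. \<forall>S'\<in>set Ss. S \<noteq> S' \<longrightarrow> S \<inter> S' = {}"
  shows "orthonormal n (map (unit_indicator n) Ss)"
  unfolding orthonormal_def
proof (intro conjI allI impI ballI)
  fix a b assume a: "a < length (map (unit_indicator n) Ss)" and b: "b < length (map (unit_indicator n) Ss)"
  show "cinner n (map (unit_indicator n) Ss ! a) (map (unit_indicator n) Ss ! b) = (if a = b then 1 else 0)"
  proof (cases "a = b")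
    case True then show ?thesis using a sub by (auto intro!: cinner_unit_indicator_self)
  next
    case False
    then have "Ss ! a \<noteq> Ss ! b" using a b dist by (simp add: nth_eq_iff_index_eq)
    then have "Ss ! a \<inter> Ss ! b = {}" using a b disj by simp
    then show ?thesis using a b False by (simp add: cinner_unit_indicator_disjoint)
  qed
qed auto

lemma sum_squares_deviation_mean:
  fixes a :: "nat \<Rightarrow> real"
  assumes K: "card I > 0"
  shows "(\<Sum>i\<in>I. (a i - (\<Sum>j\<in>I. a j) / card I)^2) = (\<Sum>i\<in>I. (a i)^2) - (\<Sum>j\<in>I. a j)^2 / card I"
proof -
  define s where "s = (\<Sum>j\<in>I. a j)"
  define K where "K = real (card I)"
  have Kp: "K > 0" using K unfolding K_def by simp
  have "(\<Sum>i\<in>I. (a i - s / K)^2) = (\<Sum>i\<in>I. (a i)^2 - 2 * (s / K) * a i + (s / K)^2)"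
    by (rule sum.cong[OF refl]) (simp add: power2_diff mult_ac)
  also have "\<dots> = (\<Sum>i\<in>I. (a i)^2) - 2 * (s / K) * s + K * (s / K)^2"
    unfolding K_def s_def by (simp add: sum.distrib sum_subtractf sum_distrib_left)
  also have "\<dots> = (\<Sum>i\<in>I. (a i)^2) - s^2 / K"
    using Kp by (simp add: field_simps power2_eq_square)
  finally show ?thesis unfolding s_def K_def .
qed

lemma cauchy_schwarz_equality:
  fixes a :: "nat \<Rightarrow> real"
  assumes K: "card I > 0"
    and le: "(\<Sum>i\<in>I. (a i)^2) \<le> F" and Fp: "F > 0"
    and eq: "(\<Sum>i\<in>I. a i) = sqrt (real (card I) * F)"
  shows "(\<Sum>i\<in>I. (a i)^2) = F" and "\<forall>i\<in>I. a i > 0"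
proof -
  have fin: "finite I" using K card_gt_0_iff by blast
  define s where "s = (\<Sum>j\<in>I. a j)"
  define K where "K = real (card I)"
  have Kp: "K > 0" using K unfolding K_def by simp
  have s2: "s^2 = K * F" unfolding s_def eq K_def using Kp Fp by simp
  have sp: "s > 0" unfolding s_def eq using Kp Fp K by simp
  have dev: "(\<Sum>i\<in>I. (a i - s / K)^2) = (\<Sum>i\<in>I. (a i)^2) - F"
    using sum_squares_deviation_mean[OF K, of a] Kp unfolding s_def[symmetric] K_def[symmetric] s2
    by simp
  moreover have "(\<Sum>i\<in>I. (a i - s / K)^2) \<ge> 0" by (rule sum_nonneg) simp
  ultimately show F: "(\<Sum>i\<in>I. (a i)^2) = F" using le by simp
  with dev have "(\<Sum>i\<in>I. (a i - s / K)^2) = 0" by simp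
  then have "\<forall>i\<in>I. a i = s / K" using fin by (simp add: sum_nonneg_eq_0_iff)
  then show "\<forall>i\<in>I. a i > 0" using sp Kp by simp
qed

lemma offdiag_zero_if_sum_diag_eq_frobenius_sq:
  assumes T: "T \<in> carrier_mat n n"
    and eq: "(\<Sum>i<n. (cmod (T$$(i,i)))^2) = frobenius_sq T"
    and ij: "i < n" "j < n" "i \<noteq> j"
  shows "T$$(i,j) = 0"
proof -
  define off where "off i = (\<Sum>j\<in>{..<n}-{i}. (cmod (T$$(i,j)))^2)" for i
  have "frobenius_sq T = (\<Sum>i<n. (cmod (T$$(i,i)))^2 + off i)"
    unfolding frobenius_sq_def off_def using T
    by (auto intro!: sum.cong simp: sum.remove[of "{..<n}"])
  then have "(\<Sum>i<n. off i) = 0" using eq by (simp add: sum.distrib)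
  then have "off i = 0"
    using ij by (subst (asm) sum_nonneg_eq_0_iff) (auto simp: off_def intro: sum_nonneg)
  then have "(cmod (T$$(i,j)))^2 = 0"
    using ij unfolding off_def by (subst (asm) sum_nonneg_eq_0_iff) auto
  then show ?thesis by simp
qed

lemma diagonal_if_sum_diag_extremal:
  assumes T: "T \<in> carrier_mat n n" and zero: "\<forall>i<p. T$$(i,i) = 0" and pn: "p < n"
    and F: "frobenius_sq T > 0"
    and eq: "(\<Sum>i<n. cmod (T$$(i,i))) = sqrt (real (n - p) * frobenius_sq T)"
  shows "\<forall>i<n. \<forall>j<n. i \<noteq> j \<longrightarrow> T$$(i,j) = 0" and "\<forall>i. p \<le> i \<and> i < n \<longrightarrow> T$$(i,i) \<noteq> 0"
proof -
  let ?a = "\<lambda>i. cmod (T$$(i,i))"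
  have split: "(\<Sum>i<n. f i) = (\<Sum>i\<in>{p..<n}. f i)" if "\<forall>i<p. f i = 0" for f :: "nat \<Rightarrow> real"
    using sum_lessThan_shift[of p n f] that pn sum.shift_bounds_nat_ivl[of f 0 p "n-p"]
    by (simp add: lessThan_atLeast0)
  have diag_le: "(\<Sum>i<n. (?a i)^2) \<le> frobenius_sq T"
    unfolding frobenius_sq_def using T by (auto intro!: sum_mono member_le_sum)
  have "(\<Sum>i\<in>{p..<n}. (?a i)^2) = frobenius_sq T" and pos: "\<forall>i\<in>{p..<n}. ?a i > 0"
    by (rule cauchy_schwarz_equality[where F = "frobenius_sq T"];
        use pn F diag_le eq split[of ?a] split[of "\<lambda>i. (?a i)^2"] zero in simp)+
  then have "(\<Sum>i<n. (?a i)^2) = frobenius_sq T" using split[of "\<lambda>i. (?a i)^2"] zero by simp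
  then show "\<forall>i<n. \<forall>j<n. i \<noteq> j \<longrightarrow> T$$(i,j) = 0"
    using offdiag_zero_if_sum_diag_eq_frobenius_sq[OF T] by blast
  show "\<forall>i. p \<le> i \<and> i < n \<longrightarrow> T$$(i,i) \<noteq> 0" using pos by auto
qed

lemma normal_if_unitary_diagonal:
  assumes U: "unitary_mat n U" and T: "T \<in> carrier_mat n n"
    and diag: "\<forall>i<n. \<forall>j<n. i \<noteq> j \<longrightarrow> T$$(i,j) = 0" and L: "L = U * T * adjoint_mat U"
  shows "L * adjoint_mat L = adjoint_mat L * L"
proof -
  have Uc: "U \<in> carrier_mat n n" using U unitary_mat_carrier by auto
  have TT: "T * adjoint_mat T = adjoint_mat T * T"
  proof (rule eq_matI)
    fix i j assume "i < dim_row (adjoint_mat T * T)" "j < dim_col (adjoint_mat T * T)"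
    then have ij: "i < n" "j < n" using T by auto
    have "(T * adjoint_mat T) $$ (i,j) = (\<Sum>l<n. T$$(i,l) * cnj (T$$(j,l)))"
      using T ij by (subst index_mult_mat_sum[of _ n n _ n]) auto
    also have "\<dots> = (\<Sum>l<n. cnj (T$$(l,i)) * T$$(l,j))"
    proof (rule sum.cong[OF refl])
      fix l assume "l \<in> {..<n}"
      then show "T$$(i,l) * cnj (T$$(j,l)) = cnj (T$$(l,i)) * T$$(l,j)"
        using diag ij by (cases "l = i"; cases "l = j") (auto simp: mult.commute)
    qed
    also have "\<dots> = (adjoint_mat T * T) $$ (i,j)"
      using T ij by (subst index_mult_mat_sum[of _ n n _ n]) auto
    finally show "(T * adjoint_mat T) $$ (i,j) = (adjoint_mat T * T) $$ (i,j)" .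
  qed (use T in auto)
  have adjL: "adjoint_mat L = U * adjoint_mat T * adjoint_mat U"
    unfolding L using Uc T
    by (simp add: adjoint_mat_mult[of _ n n _ n] assoc_mult_mat[of _ n n _ n _ n] mult_carrier_mat[of _ n n _ n])
  have "L * adjoint_mat L = U * (T * adjoint_mat T) * adjoint_mat U"
    and "adjoint_mat L * L = U * (adjoint_mat T * T) * adjoint_mat U"
    unfolding adjL using Uc T
    by (simp_all add: L assoc_mult_mat[of _ n n _ n _ n] mult_carrier_mat[of _ n n _ n]
        unitary_mat_cancel_left(2)[OF U])
  then show ?thesis using TT by simp
qed

lemma kernel_vec_in_span_of_first_columns:
  assumes U: "unitary_mat n U" and L: "L \<in> carrier_mat n n"
    and diag: "\<forall>i<n. \<forall>j<n. i \<noteq> j \<longrightarrow> (adjoint_mat U * L * U)$$(i,j) = 0"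
    and nz: "\<forall>i. p \<le> i \<and> i < n \<longrightarrow> (adjoint_mat U * L * U)$$(i,i) \<noteq> 0"
    and pn: "p \<le> n" and x: "x \<in> carrier_vec n" and Lx: "L *\<^sub>v x = 0\<^sub>v n" and u: "u < n"
  shows "x$u = (\<Sum>k<p. U$$(u,k) * (adjoint_mat U *\<^sub>v x)$k)"
proof -
  have Uc: "U \<in> carrier_mat n n" using U unitary_mat_carrier by auto
  define T where "T = adjoint_mat U * L * U"
  define y where "y = adjoint_mat U *\<^sub>v x"
  have Tc: "T \<in> carrier_mat n n" unfolding T_def using Uc L by auto
  have yc: "y \<in> carrier_vec n"
    unfolding y_def by (rule mult_mat_vec_carrier[of _ n n]) (use Uc x in auto)
  have Uy: "U *\<^sub>v y = x" unfolding y_def by (rule unitary_mat_cancel_vec[OF U x])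
  have "T *\<^sub>v y = adjoint_mat U *\<^sub>v (L *\<^sub>v (U *\<^sub>v y))"
    unfolding T_def using Uc L yc by (simp add: assoc_mult_mat_vec[of _ n n _ n] mult_carrier_mat[of _ n n _ n])
  also have "\<dots> = 0\<^sub>v n" unfolding Uy Lx using Uc by auto
  finally have Ty: "T *\<^sub>v y = 0\<^sub>v n" .
  have y0: "y$l = 0" if l: "p \<le> l" "l < n" for l
  proof -
    have "(T *\<^sub>v y) $ l = (\<Sum>k<n. T$$(l,k) * y$k)" by (rule index_mult_mat_vec_sum[OF Tc yc]) (use l in auto)
    also have "\<dots> = (\<Sum>k<n. (if k = l then T$$(l,l) else 0) * y$k)"
      using diag l unfolding T_def by (intro sum.cong refl) auto
    also have "\<dots> = T$$(l,l) * y$l" using l by (simp add: if_distrib[of "\<lambda>x. x * _"] cong: if_cong)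
    finally show ?thesis using Ty l nz unfolding T_def by simp
  qed
  have "x$u = (\<Sum>k<n. U$$(u,k) * y$k)"
    using index_mult_mat_vec_sum[OF Uc yc u] Uy by simp
  also have "\<dots> = (\<Sum>k<p. U$$(u,k) * y$k)"
    using y0 pn by (intro sum.mono_neutral_right) auto
  finally show ?thesis unfolding y_def .
qed

section \<open>Components have odd size\<close>

lemma offdiag_zero_if_upper_triangular_skew_hermitian:
  assumes T: "T \<in> carrier_mat n n" and ut: "upper_triangular T" and skew: "adjoint_mat T = - T"
    and ij: "i < n" "j < n" "i \<noteq> j"
  shows "T$$(i,j) = 0"
proof (cases "j < i")
  case True then show ?thesis using ut ij T by auto
next
  case False
  then have "T$$(j,i) = 0" using ut ij T by auto
  moreover have "adjoint_mat T $$ (i,j) = cnj (T$$(j,i))" using ij T by simp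
  ultimately show ?thesis using skew ij T by simp
qed

lemma adjoint_skew_lap_if_eulerian:
  assumes G: "simple_digraph n A" and eul: "\<forall>v<n. deg_diff A v = 0"
  shows "adjoint_mat (skew_lap n A) = - skew_lap n A"
proof (rule eq_matI)
  fix i j assume "i < dim_row (- skew_lap n A)" "j < dim_col (- skew_lap n A)"
  then have ij: "i < n" "j < n" by auto
  then show "adjoint_mat (skew_lap n A) $$ (i,j) = (- skew_lap n A) $$ (i,j)"
    using eul skew_sign_antisym[OF G, of i j] by (simp add: index_skew_lap)
qed auto

definition arcs_within :: "(nat \<times> nat) set \<Rightarrow> nat set \<Rightarrow> (nat \<times> nat) set" where
  "arcs_within A C = {(i,j) \<in> A. i \<in> C \<and> j \<in> C}"

lemma simple_digraph_arcs_within: "simple_digraph n A \<Longrightarrow> simple_digraph n (arcs_within A C)"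
  unfolding simple_digraph_def arcs_within_def by auto

lemma skew_sign_arcs_within:
  assumes "C \<in> components n A"
  shows "skew_sign (arcs_within A C) i j = (if j \<in> C then skew_sign A i j else 0)"
  using component_arc_iff[OF assms] unfolding skew_sign_def arcs_within_def by auto

lemma deg_diff_arcs_within:
  assumes C: "C \<in> components n A"
  shows "deg_diff (arcs_within A C) v = (if v \<in> C then deg_diff A v else 0)"
proof -
  have "{j. (v,j) \<in> arcs_within A C} = (if v \<in> C then {j. (v,j) \<in> A} else {})"
    and "{j. (j,v) \<in> arcs_within A C} = (if v \<in> C then {j. (j,v) \<in> A} else {})"
    using component_arc_iff[OF C] unfolding arcs_within_def by auto
  then show ?thesis unfolding deg_diff_def outdeg_def indeg_def by simp
qed

lemma skew_lap_mult_restriction: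
  assumes G: "simple_digraph n A" and eul: "\<forall>v<n. deg_diff A v = 0"
    and C: "C \<in> components n A" and x: "x \<in> carrier_vec n"
  shows "skew_lap n A *\<^sub>v vec n (\<lambda>v. if v \<in> C then x$v else 0) = skew_lap n (arcs_within A C) *\<^sub>v x"
proof (rule eq_vecI)
  fix k assume "k < dim_vec (skew_lap n (arcs_within A C) *\<^sub>v x)"
  then have k: "k < n" by simp
  have "(skew_lap n A *\<^sub>v vec n (\<lambda>v. if v \<in> C then x$v else 0)) $ k
      = (\<Sum>j<n. skew_lap n A $$ (k,j) * (if j \<in> C then x$j else 0))"
    by (subst index_mult_mat_vec_sum[of _ n n]) (use k in auto)
  also have "\<dots> = (\<Sum>j<n. skew_lap n (arcs_within A C) $$ (k,j) * x$j)"
    using eul k by (intro sum.cong refl)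
      (auto simp: index_skew_lap deg_diff_arcs_within[OF C] skew_sign_arcs_within[OF C])
  also have "\<dots> = (skew_lap n (arcs_within A C) *\<^sub>v x) $ k"
    by (subst index_mult_mat_vec_sum[of _ n n]) (use x k in auto)
  finally show "(skew_lap n A *\<^sub>v vec n (\<lambda>v. if v \<in> C then x$v else 0)) $ k
      = (skew_lap n (arcs_within A C) *\<^sub>v x) $ k" .
qed simp

lemma cinner_unit_indicator_singleton:
  "j < n \<Longrightarrow> cinner n (unit_indicator n {j}) x = x$j"
  unfolding cinner_def by (simp add: index_unit_indicator if_distrib[of cnj] cong: if_cong)

lemma kernel_arcs_within_orthogonal_trivial:
  assumes G: "simple_digraph n A" and eul: "\<forall>v<n. deg_diff A v = 0"
    and K: "\<forall>x\<in>carrier_vec n. skew_lap n A *\<^sub>v x = 0\<^sub>v n \<longrightarrow> (\<forall>C\<in>components n A. \<forall>v\<in>C. \<forall>w\<in>C. x$v = x$w)"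
    and C: "C \<in> components n A" and x: "x \<in> carrier_vec n"
    and Mx: "skew_lap n (arcs_within A C) *\<^sub>v x = 0\<^sub>v n"
    and orthC: "cinner n (unit_indicator n C) x = 0" and outside: "\<forall>j<n. j \<notin> C \<longrightarrow> x$j = 0"
  shows "x = 0\<^sub>v n"
proof -
  have Csub: "C \<subseteq> {..<n}" by (rule component_subset[OF G C])
  obtain v0 where v0: "v0 \<in> C" using component_nonempty[OF C] by auto
  have cC: "card C > 0" using v0 Csub finite_subset by (auto simp: card_gt_0_iff)
  define y where "y = vec n (\<lambda>v. if v \<in> C then x$v else 0)"
  have yc: "y \<in> carrier_vec n" unfolding y_def by simp
  have Ly: "skew_lap n A *\<^sub>v y = 0\<^sub>v n"
    using skew_lap_mult_restriction[OF G eul C x] Mx unfolding y_def by simp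
  have yv: "y$v = y$v0" if "v \<in> C" for v
    using K[rule_format, OF yc Ly C that v0] .
  have const: "x$v = x$v0" if v: "v \<in> C" for v
  proof -
    have "v < n" "v0 < n" using v v0 Csub by auto
    then show ?thesis using yv[OF v] v v0 unfolding y_def by simp
  qed
  have "cinner n (unit_indicator n C) x
      = complex_of_real (1 / sqrt (real (card C))) * of_nat (card C) * x$v0"
    by (rule cinner_unit_indicator_const[OF Csub]) (use const in blast)
  then have "x$v0 = 0" using orthC cC by simp
  show ?thesis
  proof (rule eq_vecI)
    fix l assume "l < dim_vec (0\<^sub>v n :: complex vec)"
    then have l: "l < n" by simp
    show "x$l = 0\<^sub>v n $ l"
      by (cases "l \<in> C") (use l const[of l] \<open>x$v0 = 0\<close> outside in auto)
  qed (use x in simp)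
qed

lemma kernel_col_if_zero_diagonal:
  assumes U: "unitary_mat n U" and M: "M \<in> carrier_mat n n"
    and diag: "\<forall>j<n. j \<noteq> i \<longrightarrow> (adjoint_mat U * M * U)$$(j,i) = 0"
    and zero: "(adjoint_mat U * M * U)$$(i,i) = 0" and i: "i < n"
  shows "M *\<^sub>v col U i = 0\<^sub>v n"
proof -
  have Uc: "U \<in> carrier_mat n n" using U unitary_mat_carrier by auto
  define T where "T = adjoint_mat U * M * U"
  have Tc: "T \<in> carrier_mat n n" unfolding T_def using Uc M by auto
  have MU: "M * U = U * T"
    unfolding T_def using Uc M by (simp add: assoc_mult_mat[of _ n n _ n _ n]
        mult_carrier_mat[of _ n n _ n] unitary_mat_cancel_left(1)[OF U])
  have colT: "col T i = 0\<^sub>v n"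
  proof (rule eq_vecI)
    fix j assume "j < dim_vec (0\<^sub>v n :: complex vec)"
    then have j: "j < n" by simp
    show "col T i $ j = 0\<^sub>v n $ j"
      using Tc i j diag zero unfolding T_def[symmetric] by (cases "j = i") auto
  qed (use Tc in simp)
  have "M *\<^sub>v col U i = col (M * U) i" by (rule col_mult2[symmetric, of _ n n _ n]) (use Uc M i in auto)
  also have "\<dots> = U *\<^sub>v col T i" unfolding MU by (rule col_mult2[of _ n n _ n]) (use Uc Tc i in auto)
  also have "\<dots> = 0\<^sub>v n" unfolding colT by (intro eq_vecI) (use Uc in \<open>auto simp: scalar_prod_def\<close>)
  finally show ?thesis .
qed

definition component_kernel_basis :: "nat \<Rightarrow> nat set \<Rightarrow> complex vec list" where
  "component_kernel_basis n C =
     map (unit_indicator n) (C # map (\<lambda>j. {j}) (filter (\<lambda>j. j \<notin> C) [0..<n]))"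

lemma length_component_kernel_basis:
  assumes "C \<subseteq> {..<n}"
  shows "length (component_kernel_basis n C) = Suc (n - card C)"
proof -
  have "length (filter (\<lambda>j. j \<notin> C) [0..<n]) = card ({0..<n} - C)"
    by (subst distinct_length_filter) (auto intro!: arg_cong[where f = card])
  also have "\<dots> = n - card C" using assms finite_subset by (subst card_Diff_subset) auto
  finally show ?thesis unfolding component_kernel_basis_def by simp
qed

lemma orthonormal_component_kernel_basis:
  "C \<subseteq> {..<n} \<Longrightarrow> C \<noteq> {} \<Longrightarrow> orthonormal n (component_kernel_basis n C)"
  unfolding component_kernel_basis_def
  by (rule orthonormal_unit_indicators) (auto simp: distinct_map inj_on_def)

lemma skew_lap_arcs_within_mult_component_kernel_basis:
  assumes G: "simple_digraph n A"
  shows "\<forall>v\<in>set (component_kernel_basis n C). skew_lap n (arcs_within A C) *\<^sub>v v = 0\<^sub>v n"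
proof
  fix v assume "v \<in> set (component_kernel_basis n C)"
  then obtain S where v: "v = unit_indicator n S"
    and S: "S = C \<or> (\<exists>j. j \<notin> C \<and> S = {j})"
    unfolding component_kernel_basis_def by auto
  have "\<forall>(i,j) \<in> arcs_within A C. i \<in> S \<longleftrightarrow> j \<in> S"
    using S unfolding arcs_within_def by auto
  then show "skew_lap n (arcs_within A C) *\<^sub>v v = 0\<^sub>v n"
    unfolding v unit_indicator_def by (rule skew_lap_mult_indicator[OF simple_digraph_arcs_within[OF G]])
qed

lemma orthogonal_component_kernel_basis:
  assumes orth: "\<forall>m<length (component_kernel_basis n C). cinner n (component_kernel_basis n C ! m) x = 0"
  shows "cinner n (unit_indicator n C) x = 0" and "\<forall>j<n. j \<notin> C \<longrightarrow> x$j = 0"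
proof -
  let ?R = "filter (\<lambda>j. j \<notin> C) [0..<n]"
  show "cinner n (unit_indicator n C) x = 0"
    using orth unfolding component_kernel_basis_def by auto
  show "\<forall>j<n. j \<notin> C \<longrightarrow> x$j = 0"
  proof (intro allI impI)
    fix j assume j: "j < n" "j \<notin> C"
    then have "j \<in> set ?R" by simp
    then obtain b where b: "b < length ?R" "?R ! b = j" by (metis in_set_conv_nth)
    then have "component_kernel_basis n C ! Suc b = unit_indicator n {j}"
      and "Suc b < length (component_kernel_basis n C)"
      unfolding component_kernel_basis_def by simp_all
    then show "x$j = 0" using orth cinner_unit_indicator_singleton[OF j(1)] by metis
  qed
qed

lemma diagonal_nonzero_beyond_component_kernel_basis:
  assumes G: "simple_digraph n A" and eul: "\<forall>v<n. deg_diff A v = 0"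
    and K: "\<forall>x\<in>carrier_vec n. skew_lap n A *\<^sub>v x = 0\<^sub>v n \<longrightarrow> (\<forall>C\<in>components n A. \<forall>v\<in>C. \<forall>w\<in>C. x$v = x$w)"
    and C: "C \<in> components n A" and U: "unitary_mat n U"
    and pre: "\<forall>j<length (component_kernel_basis n C). col U j = component_kernel_basis n C ! j"
    and diag: "\<forall>j<n. j \<noteq> i \<longrightarrow> (adjoint_mat U * skew_lap n (arcs_within A C) * U)$$(j,i) = 0"
    and i: "length (component_kernel_basis n C) \<le> i" "i < n"
  shows "(adjoint_mat U * skew_lap n (arcs_within A C) * U)$$(i,i) \<noteq> 0"
proof
  let ?B = "component_kernel_basis n C"
  assume "(adjoint_mat U * skew_lap n (arcs_within A C) * U)$$(i,i) = 0"
  then have Mx: "skew_lap n (arcs_within A C) *\<^sub>v col U i = 0\<^sub>v n"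
    by (intro kernel_col_if_zero_diagonal[OF U skew_lap_carrier diag _ i(2)])
  have Uc: "U \<in> carrier_mat n n" using U unitary_mat_carrier by auto
  have orthx: "cinner n (?B!m) (col U i) = 0" if m: "m < length ?B" for m
    using pre cinner_col[OF Uc, of m i] U m i unfolding unitary_mat_def by auto
  have "col U i = 0\<^sub>v n"
    by (rule kernel_arcs_within_orthogonal_trivial[OF G eul K C _ Mx
          orthogonal_component_kernel_basis[OF allI[OF impI[OF orthx]]]]) (use Uc i in simp)
  moreover have "cinner n (col U i) (col U i) = 1"
    using cinner_col[OF Uc i(2) i(2)] U i unfolding unitary_mat_def by simp
  ultimately show False by (simp add: cinner_def)
qed

lemma odd_card_component:
  assumes G: "simple_digraph n A" and eul: "\<forall>v<n. deg_diff A v = 0"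
    and K: "\<forall>x\<in>carrier_vec n. skew_lap n A *\<^sub>v x = 0\<^sub>v n \<longrightarrow> (\<forall>C\<in>components n A. \<forall>v\<in>C. \<forall>w\<in>C. x$v = x$w)"
    and C: "C \<in> components n A"
  shows "odd (card C)"
proof -
  define M where "M = skew_lap n (arcs_within A C)"
  define B where "B = component_kernel_basis n C"
  have GC: "simple_digraph n (arcs_within A C)" by (rule simple_digraph_arcs_within[OF G])
  have eulC: "\<forall>v<n. deg_diff (arcs_within A C) v = 0" using eul by (simp add: deg_diff_arcs_within[OF C])
  have Mc: "M \<in> carrier_mat n n" unfolding M_def by simp
  have Csub: "C \<subseteq> {..<n}" by (rule component_subset[OF G C])
  have cC: "0 < card C" "card C \<le> n"
    using component_nonempty[OF C] Csub finite_subset card_mono[OF _ Csub] by (auto simp: card_gt_0_iff)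
  have lB: "length B = Suc (n - card C)" unfolding B_def by (rule length_component_kernel_basis[OF Csub])
  then have "length B \<le> n" using cC by linarith
  then obtain U where U: "unitary_mat n U" and ut: "upper_triangular (adjoint_mat U * M * U)"
    and pre: "\<forall>j<length B. col U j = B!j \<and> (adjoint_mat U * M * U)$$(j,j) = 0"
    using unitary_schur_with_kernel_columns[OF skew_lap_carrier
        orthonormal_component_kernel_basis[OF Csub component_nonempty[OF C]]
        skew_lap_arcs_within_mult_component_kernel_basis[OF G, of C]]
    unfolding B_def M_def by blast
  define T where "T = adjoint_mat U * M * U"
  have Tc: "T \<in> carrier_mat n n" unfolding T_def using U Mc unitary_mat_carrier by fastforce
  have adjM: "adjoint_mat M = - M" unfolding M_def by (rule adjoint_skew_lap_if_eulerian[OF GC eulC])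
  have "adjoint_mat T = - T"
    unfolding T_def using U Mc unitary_mat_carrier[OF U]
    by (simp add: adjoint_mat_mult[of _ n n _ n] adjM assoc_mult_mat[of _ n n _ n _ n]
        mult_carrier_mat[of _ n n _ n])
  then have diag: "\<forall>i<n. \<forall>j<n. i \<noteq> j \<longrightarrow> T$$(i,j) = 0"
    using offdiag_zero_if_upper_triangular_skew_hermitian[OF Tc ut[folded T_def]] by blast
  have "T$$(i,i) \<noteq> 0" if "length B \<le> i" "i < n" for i
    using diagonal_nonzero_beyond_component_kernel_basis[OF G eul K C U, of i] pre diag that
    unfolding T_def M_def B_def by blast
  then have "\<forall>i<n. T$$(i,i) = 0 \<longleftrightarrow> i < length B"
    using pre unfolding T_def by (metis leI)
  then have order: "order 0 (char_poly M) = length B"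
    using order_zero_char_poly_similar_upper_triangular[OF _ Tc ut[folded T_def]]
      unitary_mat_similar(2)[OF U Mc] \<open>length B \<le> n\<close> unfolding T_def by blast
  have skew: "\<forall>i<n. \<forall>j<n. M$$(j,i) = - M$$(i,j)"
  proof (intro allI impI)
    fix i j assume "i < n" "j < n"
    then show "M$$(j,i) = - M$$(i,j)"
      using eulC skew_sign_antisym[OF GC, of i j] unfolding M_def by (simp add: index_skew_lap)
  qed
  have "even (length B) \<longleftrightarrow> even n"
    using order_zero_parity_of_reflection[OF char_poly_nonzero[OF Mc] char_poly_skew_reflection[OF Mc skew]]
    unfolding order .
  then show ?thesis using lB cC by presburger
qed

lemma SLE_eq_sum_diag_unitary_triangular:
  assumes U: "unitary_mat n U" and ut: "upper_triangular (adjoint_mat U * skew_lap n A * U)"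
  shows "SLE n A = (\<Sum>i<n. cmod ((adjoint_mat U * skew_lap n A * U) $$ (i,i)))"
  unfolding SLE_def
  by (rule sum_roots_char_poly_similar_upper_triangular[OF unitary_mat_similar(2)[OF U skew_lap_carrier] _ ut])
    (use U in \<open>auto simp: unitary_mat_def\<close>)

lemma card_components_le: "card (components n A) \<le> n"
  unfolding components_eq_Image using card_image_le[of "{0..<n}"] by simp

lemma schur_skew_lap_component_columns:
  assumes G: "simple_digraph n A"
  obtains U cs where "unitary_mat n U" "upper_triangular (adjoint_mat U * skew_lap n A * U)"
    and "set cs = components n A" "length cs = card (components n A)"
    and "\<forall>k<length cs. col U k = unit_indicator n (cs!k)"
    and "\<forall>k<length cs. (adjoint_mat U * skew_lap n A * U)$$(k,k) = 0"
proof -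
  obtain cs where cs: "distinct cs" "set cs = components n A"
    using finite_distinct_list[of "components n A"] unfolding components_eq_Image by blast
  have "orthonormal n (map (unit_indicator n) cs)"
  proof (rule orthonormal_unit_indicators[OF _ cs(1)])
    show "\<forall>S\<in>set cs. S \<subseteq> {..<n} \<and> S \<noteq> {}"
      using cs(2) component_subset[OF G] component_nonempty by auto
    show "\<forall>S\<in>set cs. \<forall>S'\<in>set cs. S \<noteq> S' \<longrightarrow> S \<inter> S' = {}"
      using cs(2) components_eqI by blast
  qed
  moreover have "\<forall>v\<in>set (map (unit_indicator n) cs). skew_lap n A *\<^sub>v v = 0\<^sub>v n"
  proof
    fix v assume "v \<in> set (map (unit_indicator n) cs)"
    then obtain S where S: "S \<in> components n A" and v: "v = unit_indicator n S" using cs(2) by auto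
    have "\<forall>(i,j) \<in> A. i \<in> S \<longleftrightarrow> j \<in> S" using component_arc_iff[OF S] by auto
    then show "skew_lap n A *\<^sub>v v = 0\<^sub>v n"
      unfolding v unit_indicator_def by (rule skew_lap_mult_indicator[OF G])
  qed
  moreover have "length cs \<le> n"
    using cs distinct_card[OF cs(1)] card_components_le[of n A] by simp
  ultimately obtain U where "unitary_mat n U" "upper_triangular (adjoint_mat U * skew_lap n A * U)"
    and "\<forall>k<length cs. col U k = map (unit_indicator n) cs ! k \<and> (adjoint_mat U * skew_lap n A * U)$$(k,k) = 0"
    using unitary_schur_with_kernel_columns[OF skew_lap_carrier] by (metis length_map)
  then show ?thesis using that[of U cs] cs distinct_card[OF cs(1)] by simp
qed

lemma kernel_skew_lap_constant_on_components:
  assumes G: "simple_digraph n A" and U: "unitary_mat n U"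
    and cs: "set cs \<subseteq> components n A" "length cs \<le> n"
    and cols: "\<forall>k<length cs. col U k = unit_indicator n (cs!k)"
    and diag: "\<forall>i<n. \<forall>j<n. i \<noteq> j \<longrightarrow> (adjoint_mat U * skew_lap n A * U)$$(i,j) = 0"
    and nz: "\<forall>i. length cs \<le> i \<and> i < n \<longrightarrow> (adjoint_mat U * skew_lap n A * U)$$(i,i) \<noteq> 0"
  shows "\<forall>x\<in>carrier_vec n. skew_lap n A *\<^sub>v x = 0\<^sub>v n \<longrightarrow> (\<forall>C\<in>components n A. \<forall>v\<in>C. \<forall>w\<in>C. x$v = x$w)"
proof (intro ballI impI)
  fix x C v w assume x: "x \<in> carrier_vec n" and Lx: "skew_lap n A *\<^sub>v x = 0\<^sub>v n"
    and C: "C \<in> components n A" and v: "v \<in> C" and w: "w \<in> C"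
  have Uc: "U \<in> carrier_mat n n" using U unitary_mat_carrier by auto
  have vw: "v < n" "w < n" using component_subset[OF G C] v w by auto
  txt \<open>Column \<open>k\<close> of \<open>U\<close> is constant on \<open>C\<close>, since the component \<open>cs!k\<close> either contains or
    is disjoint from \<open>C\<close>.\<close>
  have "U$$(v,k) = U$$(w,k)" if k: "k < length cs" for k
  proof -
    have ck: "cs!k \<in> components n A" using k cs nth_mem by blast
    have "v \<in> cs!k \<longleftrightarrow> w \<in> cs!k" using components_eqI[OF ck C] v w by blast
    moreover have "U$$(u,k) = unit_indicator n (cs!k) $ u" if "u < n" for u
      using Uc that k cs(2) cols[rule_format, OF k, symmetric] by simp
    ultimately show ?thesis using vw by (simp add: index_unit_indicator)
  qed
  then show "x$v = x$w"
    using kernel_vec_in_span_of_first_columns[OF U skew_lap_carrier diag nz cs(2) x Lx] vw by simp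
qed

lemma schur_form_diagonal_if_SLE_extremal:
  assumes G: "simple_digraph n A" and a: "(i0,j0) \<in> A"
    and U: "unitary_mat n U" and ut: "upper_triangular (adjoint_mat U * skew_lap n A * U)"
    and p: "p = card (components n A)" and zero: "\<forall>k<p. (adjoint_mat U * skew_lap n A * U)$$(k,k) = 0"
    and eq: "SLE n A = sqrt (2 * M1 n A * (real n - real p))"
  shows "\<forall>i<n. \<forall>j<n. i \<noteq> j \<longrightarrow> (adjoint_mat U * skew_lap n A * U)$$(i,j) = 0"
    and "\<forall>i. p \<le> i \<and> i < n \<longrightarrow> (adjoint_mat U * skew_lap n A * U)$$(i,i) \<noteq> 0"
proof -
  define T where "T = adjoint_mat U * skew_lap n A * U"
  have Tc: "T \<in> carrier_mat n n" unfolding T_def using U unitary_mat_carrier by fastforce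
  have pn: "p < n" unfolding p by (rule card_components_less[OF G a])
  have frob: "frobenius_sq T = 2 * M1 n A"
    unfolding T_def frobenius_sq_unitary_conj[OF U skew_lap_carrier] by (rule frobenius_sq_skew_lap[OF G])
  have "card A > 0" using a G finite_subset unfolding simple_digraph_def by (auto simp: card_gt_0_iff)
  then have "frobenius_sq T > 0" unfolding frob M1_def by (simp add: add_pos_nonneg sum_nonneg)
  moreover have "(\<Sum>i<n. cmod (T$$(i,i))) = sqrt (real (n - p) * frobenius_sq T)"
    using eq pn unfolding SLE_eq_sum_diag_unitary_triangular[OF U ut] T_def[symmetric] frob
    by (simp add: of_nat_diff mult_ac)
  ultimately show "\<forall>i<n. \<forall>j<n. i \<noteq> j \<longrightarrow> T$$(i,j) = 0"
    and "\<forall>i. p \<le> i \<and> i < n \<longrightarrow> T$$(i,i) \<noteq> 0"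
    using diagonal_if_sum_diag_extremal[OF Tc zero[folded T_def] pn] by blast+
qed

theorem corollary1:
  fixes n :: nat and A :: "(nat \<times> nat) set"
  assumes "simple_digraph n A"
    and "SLE n A = sqrt (2 * M1 n A * (real n - real (card (components n A))))"
  shows "\<forall>C \<in> components n A. (\<forall>v \<in> C. outdeg A v = indeg A v) \<and> odd (card C)"
proof (cases "A = {}")
  case True
  then show ?thesis by (auto simp: components_no_arcs outdeg_def indeg_def)
next
  case False
  note G = assms(1)
  from False obtain a b where a: "(a,b) \<in> A" by auto
  obtain U cs where U: "unitary_mat n U" and ut: "upper_triangular (adjoint_mat U * skew_lap n A * U)"
    and cs: "set cs = components n A" "length cs = card (components n A)"
    and cols: "\<forall>k<length cs. col U k = unit_indicator n (cs!k)"
    and zero: "\<forall>k<length cs. (adjoint_mat U * skew_lap n A * U)$$(k,k) = 0"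
    by (rule schur_skew_lap_component_columns[OF G])
  have "SLE n A = sqrt (2 * M1 n A * (real n - real (length cs)))" using assms(2) cs(2) by simp
  note extremal = schur_form_diagonal_if_SLE_extremal[OF G a U ut cs(2) zero this]
  have "skew_lap n A = U * (adjoint_mat U * skew_lap n A * U) * adjoint_mat U"
    by (rule unitary_mat_similar(1)[OF U skew_lap_carrier])
  moreover have "adjoint_mat U * skew_lap n A * U \<in> carrier_mat n n"
    using unitary_mat_carrier[OF U] by fastforce
  ultimately have eul: "\<forall>v<n. deg_diff A v = 0"
    by (intro eulerian_if_skew_lap_normal[OF G] normal_if_unitary_diagonal[OF U _ extremal(1)])
  have K: "\<forall>x\<in>carrier_vec n. skew_lap n A *\<^sub>v x = 0\<^sub>v n \<longrightarrow>
      (\<forall>C\<in>components n A. \<forall>v\<in>C. \<forall>w\<in>C. x$v = x$w)"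
    by (rule kernel_skew_lap_constant_on_components[OF G U _ _ cols extremal])
      (use cs card_components_le[of n A] in simp_all)
  show ?thesis
  proof
    fix C assume C: "C \<in> components n A"
    then show "(\<forall>v\<in>C. outdeg A v = indeg A v) \<and> odd (card C)"
      using eul component_subset[OF G C] odd_card_component[OF G eul K C] unfolding deg_diff_def by auto
  qed
qed

end
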